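(* Assume the van Kampen setup below, with compatible future retracts $Q_k:\vec\pi_1(X_k)\to\vec\pi_1(X_k,B_k)$ and compatible future retracts $P_k:\vec\pi_1(X_k,B_k)\to\vec\pi_1(X_k,A_k)$ ($k=0,1,2$), each $P_k$ being left adjoint to the inclusion $\iota_k:\vec\pi_1(X_k,A_k)\to\vec\pi_1(X_k,B_k)$. Let $P:\vec\pi_1(X,B)\to\vec\pi_1(X,A)$ be the unique functor with $P\circ j_k=j'_k\circ P_k$ ($k=1,2$). Then $P$ is left adjoint to the inclusion $\iota:\vec\pi_1(X,A)\to\vec\pi_1(X,B)$, with unit given at $x\in B$ by the image of the unit of $P_k$ at $x$ (for any $k\in\{1,2\}$ with $x\in B_k$) and counit the identity; in particular $P$ is a future retract of $\vec\pi_1(X,B)$ onto $\vec\pi_1(X,A)$.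
   Context: A d-space is a topological space with a set of continuous paths $[0,1]\to X$ (dipaths) containing all constant paths, closed under precomposition with continuous non-decreasing maps $[0,1]\to[0,1]$ and under concatenation; subsets carry the dipaths with image in them. The fundamental category $\vec\pi_1(X)$ has objects the points of $X$ and morphisms $a\to b$ the classes of dipaths from $a$ to $b$ modulo the equivalence relation generated by endpoint-fixing directed homotopies; composition is concatenation. For $A\subseteq X$, $\vec\pi_1(X,A)$ is the full subcategory on objects in $A$. For $A\subseteq B\subseteq X$ with inclusion $\iota:\vec\pi_1(X,A)\to\vec\pi_1(X,B)$, a future retract is a functor $P:\vec\pi_1(X,B)\to\vec\pi_1(X,A)$ left adjoint to $\iota$ whose unit satisfies $\eta_a=\mathrm{id}_a$ for $a\in A$. Van Kampen setup: $X$ a d-space, $X_1,X_2\subseteq X$ with $X=\mathrm{Int}(X_1)\cup\mathrm{Int}(X_2)$, dipaths of $X$ the finite concatenations of dipaths of $X_1$ and $X_2$, $X_0=X_1\cap X_2$. For $k=0,1,2$, $A_k\subseteq B_k\subseteq X_k$ with $A_0=A_1\cap A_2$, $B_0=B_1\cap B_2$, $A=A_1\cup A_2$, $B=B_1\cup B_2$, $A=\mathrm{Int}_A(A_1)\cup\mathrm{Int}_A(A_2)$, $B=\mathrm{Int}_B(B_1)\cup\mathrm{Int}_B(B_2)$. Inclusion-induced functors: $i_k:\vec\pi_1(X_0,B_0)\to\vec\pi_1(X_k,B_k)$, $j_k:\vec\pi_1(X_k,B_k)\to\vec\pi_1(X,B)$, $i'_k:\vec\pi_1(X_0,A_0)\to\vec\pi_1(X_k,A_k)$,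 $j'_k:\vec\pi_1(X_k,A_k)\to\vec\pi_1(X,A)$ ($k=1,2$). Compatible future retracts $Q_k:\vec\pi_1(X_k)\to\vec\pi_1(X_k,B_k)$: each a future retract with unit $\theta^k$, commuting with the inclusion-induced functors from index $0$ to $k=1,2$, with $\theta^0_x$ mapping to $\theta^k_x$ for $x\in X_0$. Compatible future retracts $P_k:\vec\pi_1(X_k,B_k)\to\vec\pi_1(X_k,A_k)$: each a future retract with unit $\eta^k$, $P_k\circ i_k=i'_k\circ P_0$ ($k=1,2$), and $\eta^0_x$ mapping to $\eta^k_x$ for $x\in B_0$. *)

theory Defs
  imports "HOL-Analysis.Analysis"
begin

text \<open>Concatenation of paths (same formula as joinpaths, but for arbitrary types).\<close>
definition dconcat :: "(real \<Rightarrow> 'a) \<Rightarrow> (real \<Rightarrow> 'a) \<Rightarrow> real \<Rightarrow> 'a" where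
  "dconcat p q = (\<lambda>t. if t \<le> 1/2 then p (2 * t) else q (2 * t - 1))"

text \<open>Paths are total
functions real => 'a, only their values on [0,1] matter; we therefore require D to be
saturated under agreement on [0,1] (representation convention).\<close>

definition dspace :: "'a topology \<Rightarrow> (real \<Rightarrow> 'a) set \<Rightarrow> bool" where
  "dspace X D \<longleftrightarrow>
     (\<forall>p\<in>D. continuous_map (top_of_set {0..1}) X p) \<and>
     (\<forall>x\<in>topspace X. (\<lambda>t. x) \<in> D) \<and>
     (\<forall>p\<in>D. \<forall>\<phi>. continuous_on {0..1} \<phi> \<and> \<phi> ` {0..1} \<subseteq> {0..1} \<and> mono_on {0..1} \<phi>
              \<longrightarrow> p \<circ> \<phi> \<in> D) \<and>
     (\<forall>p\<in>D. \<forall>q\<in>D. p 1 = q 0 \<longrightarrow> dconcat p q \<in> D) \<and>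
     (\<forall>p\<in>D. \<forall>q. (\<forall>t\<in>{0..1}. q t = p t) \<longrightarrow> q \<in> D)"

definition dpaths :: "(real \<Rightarrow> 'a) set \<Rightarrow> 'a set \<Rightarrow> (real \<Rightarrow> 'a) set" where
  "dpaths D S = {p \<in> D. p ` {0..1} \<subseteq> S}"

text \<open>Endpoint-fixing directed homotopy in the subspace S from p to q: a d-map
  from the directed square (dipaths = pairs of nondecreasing continuous reparametrisations)
  to S.\<close>
definition dhtp :: "'a topology \<Rightarrow> (real \<Rightarrow> 'a) set \<Rightarrow> 'a set
                     \<Rightarrow> (real \<Rightarrow> 'a) \<Rightarrow> (real \<Rightarrow> 'a) \<Rightarrow> bool" where
  "dhtp X D S p q \<longleftrightarrow> (\<exists>H :: real \<times> real \<Rightarrow> 'a.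
     continuous_map (top_of_set ({0..1} \<times> {0..1})) (subtopology X S) H \<and>
     (\<forall>a b. continuous_on {0..1} a \<and> a ` {0..1} \<subseteq> {0..1} \<and> mono_on {0..1} a \<and>
            continuous_on {0..1} b \<and> b ` {0..1} \<subseteq> {0..1} \<and> mono_on {0..1} b
            \<longrightarrow> (\<lambda>t. H (a t, b t)) \<in> dpaths D S) \<and>
     (\<forall>t\<in>{0..1}. H (t, 0) = p t \<and> H (t, 1) = q t) \<and>
     (\<forall>s\<in>{0..1}. H (0, s) = p 0 \<and> H (1, s) = p 1))"

definition dequiv :: "'a topology \<Rightarrow> (real \<Rightarrow> 'a) set \<Rightarrow> 'a set
                       \<Rightarrow> (real \<Rightarrow> 'a) \<Rightarrow> (real \<Rightarrow> 'a) \<Rightarrow> bool" where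
  "dequiv X D S = (\<lambda>p q. dhtp X D S p q \<or> dhtp X D S q p)\<^sup>*\<^sup>*"

definition dcls :: "'a topology \<Rightarrow> (real \<Rightarrow> 'a) set \<Rightarrow> 'a set
                     \<Rightarrow> (real \<Rightarrow> 'a) \<Rightarrow> (real \<Rightarrow> 'a) set" where
  "dcls X D S p = {q \<in> dpaths D S. dequiv X D S p q}"

definition dhom :: "'a topology \<Rightarrow> (real \<Rightarrow> 'a) set \<Rightarrow> 'a set \<Rightarrow> 'a \<Rightarrow> 'a
                     \<Rightarrow> (real \<Rightarrow> 'a) set set" where
  "dhom X D S a b = {dcls X D S p | p. p \<in> dpaths D S \<and> p 0 = a \<and> p 1 = b}"

definition did :: "'a topology \<Rightarrow> (real \<Rightarrow> 'a) set \<Rightarrow> 'a set \<Rightarrow> 'a \<Rightarrow> (real \<Rightarrow> 'a) set" where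
  "did X D S a = dcls X D S (\<lambda>t. a)"

text \<open>Composition g o f (first f, then g) is concatenation of representatives.\<close>
definition dcomp :: "'a topology \<Rightarrow> (real \<Rightarrow> 'a) set \<Rightarrow> 'a set
                      \<Rightarrow> (real \<Rightarrow> 'a) set \<Rightarrow> (real \<Rightarrow> 'a) set \<Rightarrow> (real \<Rightarrow> 'a) set" where
  "dcomp X D S g f = dcls X D S (dconcat (SOME p. p \<in> f) (SOME q. q \<in> g))"

text \<open>Morphism map of the functor induced by an inclusion of subspaces S \<subseteq> S':
  a class in S goes to the class in S' containing it (objects are mapped identically).\<close>
definition dincl :: "'a topology \<Rightarrow> (real \<Rightarrow> 'a) set \<Rightarrow> 'a set
                      \<Rightarrow> (real \<Rightarrow> 'a) set \<Rightarrow> (real \<Rightarrow> 'a) set" where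
  "dincl X D S' f = {q \<in> dpaths D S'. \<exists>p\<in>f. dequiv X D S' p q}"

text \<open>(Fo, Fm) is a functor from the full subcategory on objects B1 of the fundamental
  category of S1 to the full subcategory on objects B2 of the fundamental category of S2.\<close>
definition dfunctor :: "'a topology \<Rightarrow> (real \<Rightarrow> 'a) set \<Rightarrow> 'a set \<Rightarrow> 'a set \<Rightarrow> 'a set \<Rightarrow> 'a set
     \<Rightarrow> ('a \<Rightarrow> 'a) \<Rightarrow> ((real \<Rightarrow> 'a) set \<Rightarrow> (real \<Rightarrow> 'a) set) \<Rightarrow> bool" where
  "dfunctor X D S1 B1 S2 B2 Fo Fm \<longleftrightarrow>
     (\<forall>a\<in>B1. Fo a \<in> B2) \<and>
     (\<forall>a\<in>B1. \<forall>b\<in>B1. \<forall>f\<in>dhom X D S1 a b. Fm f \<in> dhom X D S2 (Fo a) (Fo b)) \<and>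
     (\<forall>a\<in>B1. Fm (did X D S1 a) = did X D S2 (Fo a)) \<and>
     (\<forall>a\<in>B1. \<forall>b\<in>B1. \<forall>c\<in>B1. \<forall>f\<in>dhom X D S1 a b. \<forall>g\<in>dhom X D S1 b c.
        Fm (dcomp X D S1 g f) = dcomp X D S2 (Fm g) (Fm f))"

text \<open>(Fo, Fm) : pi1(S,B) \<rightarrow> pi1(S,A) is left adjoint to the inclusion
  pi1(S,A) \<rightarrow> pi1(S,B), with unit \<eta> (natural, and universal arrows).\<close>
definition left_adjoint_incl :: "'a topology \<Rightarrow> (real \<Rightarrow> 'a) set \<Rightarrow> 'a set \<Rightarrow> 'a set \<Rightarrow> 'a set
     \<Rightarrow> ('a \<Rightarrow> 'a) \<Rightarrow> ((real \<Rightarrow> 'a) set \<Rightarrow> (real \<Rightarrow> 'a) set) \<Rightarrow> ('a \<Rightarrow> (real \<Rightarrow> 'a) set) \<Rightarrow> bool" where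
  "left_adjoint_incl X D S B A Fo Fm \<eta> \<longleftrightarrow>
     dfunctor X D S B S A Fo Fm \<and>
     (\<forall>x\<in>B. \<eta> x \<in> dhom X D S x (Fo x)) \<and>
     (\<forall>x\<in>B. \<forall>y\<in>B. \<forall>f\<in>dhom X D S x y.
        dcomp X D S (Fm f) (\<eta> x) = dcomp X D S (\<eta> y) f) \<and>
     (\<forall>x\<in>B. \<forall>a\<in>A. \<forall>f\<in>dhom X D S x a.
        \<exists>!g. g \<in> dhom X D S (Fo x) a \<and> dcomp X D S g (\<eta> x) = f)"

definition adj_counit :: "'a topology \<Rightarrow> (real \<Rightarrow> 'a) set \<Rightarrow> 'a set
     \<Rightarrow> ('a \<Rightarrow> 'a) \<Rightarrow> ('a \<Rightarrow> (real \<Rightarrow> 'a) set) \<Rightarrow> 'a \<Rightarrow> (real \<Rightarrow> 'a) set" where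
  "adj_counit X D S Fo \<eta> a =
     (THE g. g \<in> dhom X D S (Fo a) a \<and> dcomp X D S g (\<eta> a) = did X D S a)"

definition future_retract :: "'a topology \<Rightarrow> (real \<Rightarrow> 'a) set \<Rightarrow> 'a set \<Rightarrow> 'a set \<Rightarrow> 'a set
     \<Rightarrow> ('a \<Rightarrow> 'a) \<Rightarrow> ((real \<Rightarrow> 'a) set \<Rightarrow> (real \<Rightarrow> 'a) set) \<Rightarrow> ('a \<Rightarrow> (real \<Rightarrow> 'a) set) \<Rightarrow> bool" where
  "future_retract X D S B A Fo Fm \<eta> \<longleftrightarrow>
     left_adjoint_incl X D S B A Fo Fm \<eta> \<and> (\<forall>a\<in>A. \<eta> a = did X D S a)"

end

theory Submission
  imports Defs
begin

text \<open>
  By an abstract criterion, a functor \<open>F : \<pi>\<^sub>1(S,B) \<rightarrow> \<pi>\<^sub>1(S,A)\<close> with a candidate unit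
  \<open>\<eta>\<close> is a future retract with trivial counit as soon as \<open>\<eta>\<close> is the identity on \<open>A\<close>, satisfies
  the triangle identity \<open>F \<eta> = id\<close>, and is natural.  For the glued functor \<open>P\<close> the unit is
  glued from the units of the \<open>P\<^sub>k\<close>; the identity on \<open>A\<close>, the triangle identity and naturality
  along morphisms inside one piece \<open>X\<^sub>k\<close> are inherited from the \<open>P\<^sub>k\<close>.  Naturality along an
  arbitrary dipath of \<open>X\<close> is the real point: the dipath subdivides into pieces lying in \<open>X\<^sub>1\<close>
  or \<open>X\<^sub>2\<close>, whose endpoints need not lie in \<open>B\<close>.  The future retracts \<open>Q\<^sub>k\<close> of \<open>\<pi>\<^sub>1(X\<^sub>k)\<close>
  onto \<open>\<pi>\<^sub>1(X\<^sub>k,B\<^sub>k)\<close> push each piece to a morphism between points of \<open>B\<close> along which the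
  unit is natural (the piece is "tamed"), tamed dipaths are closed under concatenation, and
  an induction over the subdivision shows that every dipath is tamed.
\<close>

section \<open>Reparametrisations of the interval and maps on the square\<close>

text \<open>Continuous non-decreasing self-maps of \<open>[0,1]\<close>; dipaths are closed under
  precomposition with them.\<close>
definition adm :: "(real \<Rightarrow> real) \<Rightarrow> bool" where
  "adm \<phi> \<longleftrightarrow> continuous_on {0..1} \<phi> \<and> \<phi> ` {0..1} \<subseteq> {0..1} \<and> mono_on {0..1} \<phi>"

lemma admI:
  assumes "continuous_on {0..1} \<phi>" "\<And>t. t \<in> {0..1} \<Longrightarrow> \<phi> t \<in> {0..1}"
    "\<And>s t. 0 \<le> s \<Longrightarrow> s \<le> t \<Longrightarrow> t \<le> 1 \<Longrightarrow> \<phi> s \<le> \<phi> t"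
  shows "adm \<phi>"
  using assms unfolding adm_def by (auto intro!: mono_onI)

lemma adm_range: "adm \<phi> \<Longrightarrow> 0 \<le> t \<Longrightarrow> t \<le> 1 \<Longrightarrow> 0 \<le> \<phi> t \<and> \<phi> t \<le> 1"
  unfolding adm_def by (force simp: image_subset_iff)

lemma adm_mono: "adm \<phi> \<Longrightarrow> 0 \<le> s \<Longrightarrow> s \<le> t \<Longrightarrow> t \<le> 1 \<Longrightarrow> \<phi> s \<le> \<phi> t"
  unfolding adm_def using mono_onD[of "{0..1}" \<phi> s t] by auto

lemma adm_cont: "adm \<phi> \<Longrightarrow> continuous_on {0..1} \<phi>"
  unfolding adm_def by auto

lemma adm_id: "adm (\<lambda>t. t)" by (rule admI) auto

lemma adm_const: "c \<in> {0..1} \<Longrightarrow> adm (\<lambda>t. c)" by (rule admI) auto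

lemma adm_comp: "adm \<phi> \<Longrightarrow> adm \<psi> \<Longrightarrow> adm (\<lambda>t. \<phi> (\<psi> t))"
proof (rule admI)
  assume a: "adm \<phi>" "adm \<psi>"
  show "continuous_on {0..1} (\<lambda>t. \<phi> (\<psi> t))"
    using a unfolding adm_def by (intro continuous_on_compose2[of "{0..1}" \<phi> "{0..1}" \<psi>]) auto
  show "\<phi> (\<psi> t) \<in> {0..1}" if "t \<in> {0..1}" for t
    using adm_range[OF a(2), of t] adm_range[OF a(1), of "\<psi> t"] that by auto
  show "\<phi> (\<psi> s) \<le> \<phi> (\<psi> t)" if "0 \<le> s" "s \<le> t" "t \<le> 1" for s t
    using adm_mono[OF a(2), of s t] adm_range[OF a(2), of s] adm_range[OF a(2), of t]
      adm_mono[OF a(1), of "\<psi> s" "\<psi> t"] that by auto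
qed

text \<open>The affine parametrisations of \<open>[0,c]\<close> and \<open>[c,1]\<close>, used to cut a path at time \<open>c\<close>.\<close>
lemma adm_initial: "0 \<le> c \<Longrightarrow> c \<le> 1 \<Longrightarrow> adm (\<lambda>u. c * u)"
  by (rule admI) (auto intro!: continuous_intros mult_left_mono simp: mult_le_one)

lemma adm_final: "0 \<le> c \<Longrightarrow> c \<le> 1 \<Longrightarrow> adm (\<lambda>u. c + u * (1 - c))"
proof (rule admI)
  assume c: "0 \<le> c" "c \<le> 1"
  show "continuous_on {0..1} (\<lambda>u. c + u * (1 - c))" by (intro continuous_intros)
  show "c + t * (1 - c) \<in> {0..1}" if "t \<in> {0..1}" for t
  proof -
    have "t * (1 - c) \<le> 1 * (1 - c)" using that c by (intro mult_right_mono) auto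
    thus ?thesis using that c by auto
  qed
  show "c + s * (1 - c) \<le> c + t * (1 - c)" if "0 \<le> s" "s \<le> t" "t \<le> 1" for s t
    using that c by (auto intro: mult_right_mono)
qed

text \<open>The two halves of a concatenation, seen as reparametrisations.\<close>
lemma adm_first_half: "adm (\<lambda>t. min (2 * t) 1)"
  by (rule admI) (auto intro!: continuous_intros)

lemma adm_second_half: "adm (\<lambda>t. max (2 * t - 1) 0)"
  by (rule admI) (auto intro!: continuous_intros)

lemma sq_mem: "z \<in> {0..1::real} \<times> {0..1::real} \<longleftrightarrow> 0 \<le> fst z \<and> fst z \<le> 1 \<and> 0 \<le> snd z \<and> snd z \<le> 1"
  by (cases z) auto

definition paste :: "(real \<times> real \<Rightarrow> 'a) \<Rightarrow> (real \<times> real \<Rightarrow> 'a) \<Rightarrow> real \<times> real \<Rightarrow> 'a" where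
  "paste H1 H2 = (\<lambda>z. if fst z \<le> 1/2 then H1 (min (2 * fst z) 1, snd z)
                      else H2 (max (2 * fst z - 1) 0, snd z))"

lemma continuous_map_paste:
  fixes H1 H2 :: "real \<times> real \<Rightarrow> 'a"
  defines "sq \<equiv> {0..1::real} \<times> {0..1::real}"
  assumes c1: "continuous_map (top_of_set sq) Y H1" and c2: "continuous_map (top_of_set sq) Y H2"
    and E: "\<And>s. s \<in> {0..1} \<Longrightarrow> H1 (1, s) = H2 (0, s)"
  shows "continuous_map (top_of_set sq) Y (paste H1 H2)"
  unfolding paste_def
proof (rule continuous_map_cases_le)
  have g1: "continuous_map (top_of_set sq) (top_of_set sq) (\<lambda>z. (min (2 * fst z) 1, snd z))"
    and g2: "continuous_map (top_of_set sq) (top_of_set sq) (\<lambda>z. (max (2 * fst z - 1) 0, snd z))"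
    unfolding sq_def by (auto simp: continuous_map_subtopology_eu sq_mem intro!: continuous_intros)
  show "continuous_map (subtopology (top_of_set sq) {x \<in> topspace (top_of_set sq). fst x \<le> 1/2})
          Y (\<lambda>z. H1 (min (2 * fst z) 1, snd z))"
    by (rule continuous_map_from_subtopology)
       (use continuous_map_compose[OF g1 c1] in \<open>simp add: o_def\<close>)
  show "continuous_map (subtopology (top_of_set sq) {x \<in> topspace (top_of_set sq). 1/2 \<le> fst x})
          Y (\<lambda>z. H2 (max (2 * fst z - 1) 0, snd z))"
    by (rule continuous_map_from_subtopology)
       (use continuous_map_compose[OF g2 c2] in \<open>simp add: o_def\<close>)
  show "H1 (min (2 * fst x) 1, snd x) = H2 (max (2 * fst x - 1) 0, snd x)"
    if "x \<in> topspace (top_of_set sq)" "fst x = 1/2" for x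
  proof -
    have "min (2 * fst x) 1 = 1" "max (2 * fst x - 1) 0 = 0" using that(2) by auto
    then show ?thesis using that(1) E[of "snd x"] by (auto simp: sq_def sq_mem)
  qed
qed (simp_all add: continuous_on_fst continuous_on_id)

section \<open>Dipaths and directed homotopies in a d-space\<close>

locale d_space =
  fixes X :: "'a topology" and D :: "(real \<Rightarrow> 'a) set"
  assumes dsp: "dspace X D"
begin

lemma D_cont: "p \<in> D \<Longrightarrow> continuous_map (top_of_set {0..1}) X p"
  using dsp unfolding dspace_def by auto

lemma D_const: "x \<in> topspace X \<Longrightarrow> (\<lambda>t. x) \<in> D"
  using dsp unfolding dspace_def by auto

lemma D_reparam: "p \<in> D \<Longrightarrow> adm \<phi> \<Longrightarrow> (\<lambda>t. p (\<phi> t)) \<in> D"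
  using dsp unfolding dspace_def adm_def by (auto simp: o_def)

lemma D_concat: "p \<in> D \<Longrightarrow> q \<in> D \<Longrightarrow> p 1 = q 0 \<Longrightarrow> dconcat p q \<in> D"
  using dsp unfolding dspace_def by auto

lemma D_agree: "p \<in> D \<Longrightarrow> (\<And>t. t \<in> {0..1} \<Longrightarrow> q t = p t) \<Longrightarrow> q \<in> D"
  using dsp unfolding dspace_def by auto

lemma D_img: "p \<in> D \<Longrightarrow> t \<in> {0..1} \<Longrightarrow> p t \<in> topspace X"
  using continuous_map_image_subset_topspace[OF D_cont[of p]] by auto

lemma dp_reparam: "p \<in> dpaths D S \<Longrightarrow> adm \<phi> \<Longrightarrow> (\<lambda>t. p (\<phi> t)) \<in> dpaths D S"
  unfolding dpaths_def using D_reparam adm_range by (fastforce simp: image_subset_iff)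

lemma dp_agree: "p \<in> dpaths D S \<Longrightarrow> (\<And>t. t \<in> {0..1} \<Longrightarrow> q t = p t) \<Longrightarrow> q \<in> dpaths D S"
  unfolding dpaths_def using D_agree by (auto simp: image_subset_iff)

lemma dp_const: "x \<in> topspace X \<Longrightarrow> x \<in> S \<Longrightarrow> (\<lambda>t. x) \<in> dpaths D S"
  unfolding dpaths_def using D_const by auto

lemma dp_concat: "p \<in> dpaths D S \<Longrightarrow> q \<in> dpaths D S \<Longrightarrow> p 1 = q 0 \<Longrightarrow> dconcat p q \<in> dpaths D S"
  unfolding dpaths_def using D_concat by (auto simp: dconcat_def image_subset_iff)

lemma dp_mono: "p \<in> dpaths D S \<Longrightarrow> S \<subseteq> S' \<Longrightarrow> p \<in> dpaths D S'"
  unfolding dpaths_def by auto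

lemma dp_pt: "p \<in> dpaths D S \<Longrightarrow> t \<in> {0..1} \<Longrightarrow> p t \<in> S \<and> p t \<in> topspace X"
  unfolding dpaths_def using D_img by auto

text \<open>A path that is a dipath on \<open>[0,c]\<close> and on \<open>[c,1]\<close> (after affine rescaling) is a dipath:
  reparametrise the concatenation of the two halves.\<close>
lemma D_split:
  assumes c: "0 \<le> c" "c \<le> 1"
    and r1: "(\<lambda>u. r (c * u)) \<in> D" and r2: "(\<lambda>u. r (c + u * (1 - c))) \<in> D"
  shows "r \<in> D"
proof (cases "c = 0 \<or> c = 1")
  case True then show ?thesis using r1 r2 by auto
next
  case False
  have cc: "0 < c" "c < 1" using c False by auto
  let ?r1 = "\<lambda>u. r (c * u)" and ?r2 = "\<lambda>u. r (c + u * (1 - c))"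
  let ?\<phi> = "\<lambda>t. if t \<le> c then t / (2 * c) else 1/2 + (t - c) / (2 * (1 - c))"
  have a: "adm ?\<phi>"
  proof (rule admI)
    show "continuous_on {0..1} ?\<phi>"
      by (rule continuous_on_cases_le[where h="\<lambda>t. t", unfolded if_distrib])
         (use cc in \<open>auto intro!: continuous_intros\<close>)
    show "?\<phi> t \<in> {0..1}" if "t \<in> {0..1}" for t
      using that cc by (auto simp: field_simps)
    show "?\<phi> s \<le> ?\<phi> t" if "0 \<le> s" "s \<le> t" "t \<le> 1" for s t
    proof -
      have A: "s / (2 * c) \<le> t / (2 * c)"
        and B: "(s - c) / (2 * (1 - c)) \<le> (t - c) / (2 * (1 - c))"
        using that cc by (simp_all add: divide_right_mono)
      have C: "s / (2 * c) \<le> 1/2" if "s \<le> c" using that cc by (simp add: field_simps)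
      have E: "0 \<le> (t - c) / (2 * (1 - c))" if "\<not> t \<le> c" using that cc by simp
      show ?thesis
      proof (cases "s \<le> c")
        case True
        show ?thesis
        proof (cases "t \<le> c")
          case False
          then show ?thesis using C[OF True] E[OF False] True by simp
        qed (use A True in simp)
      next
        case False
        then have "\<not> t \<le> c" using that by auto
        then show ?thesis using B False by simp
      qed
    qed
  qed
  have "(\<lambda>t. dconcat ?r1 ?r2 (?\<phi> t)) \<in> D" by (rule D_reparam[OF D_concat[OF r1 r2] a]) simp
  then show ?thesis
  proof (rule D_agree)
    fix t :: real assume t: "t \<in> {0..1}"
    show "r t = dconcat ?r1 ?r2 (?\<phi> t)"
    proof (cases "t \<le> c")
      case True
      have "?\<phi> t \<le> 1/2" using True cc by (simp add: field_simps)
      moreover have "c * (2 * (t / (2 * c))) = t" using cc by (simp add: field_simps)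
      ultimately show ?thesis using True by (simp add: dconcat_def)
    next
      case False
      have "\<not> ?\<phi> t \<le> 1/2" using False cc by (simp add: field_simps)
      moreover have "c + (2 * (1/2 + (t - c) / (2 * (1 - c))) - 1) * (1 - c) = t"
        using cc by (simp add: field_simps)
      ultimately show ?thesis using False by (simp add: dconcat_def)
    qed
  qed
qed

text \<open>A path that follows the dipath \<open>r\<^sub>1\<close> while an admissible clock \<open>a\<close> is below \<open>1/2\<close> and
  the dipath \<open>r\<^sub>2\<close> while it is above is itself a dipath (cut at a time where \<open>a = 1/2\<close>).\<close>
lemma D_threshold_glue:
  assumes a: "adm a" and r1: "r1 \<in> D" and r2: "r2 \<in> D"
    and le: "\<And>t. t \<in> {0..1} \<Longrightarrow> a t \<le> 1/2 \<Longrightarrow> r t = r1 t"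
    and ge: "\<And>t. t \<in> {0..1} \<Longrightarrow> 1/2 \<le> a t \<Longrightarrow> r t = r2 t"
  shows "r \<in> D"
proof (cases "a 1 \<le> 1/2")
  case True
  show ?thesis using r1
  proof (rule D_agree)
    fix t :: real assume t: "t \<in> {0..1}"
    then show "r t = r1 t" using le adm_mono[OF a, of t 1] True by auto
  qed
next
  case n1: False
  show ?thesis
  proof (cases "1/2 \<le> a 0")
    case True
    show ?thesis using r2
    proof (rule D_agree)
      fix t :: real assume t: "t \<in> {0..1}"
      then show "r t = r2 t" using ge adm_mono[OF a, of 0 t] True by auto
    qed
  next
    case n0: False
    obtain c where c: "0 \<le> c" "c \<le> 1" "a c = 1/2"
      using IVT'[of a 0 "1/2" 1] n0 n1 adm_cont[OF a] by auto
    show ?thesis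
    proof (rule D_split[OF c(1,2)])
      show "(\<lambda>u. r (c * u)) \<in> D" using D_reparam[OF r1 adm_initial[OF c(1,2)]]
      proof (rule D_agree)
        fix u :: real assume u: "u \<in> {0..1}"
        have "c * u \<in> {0..1}" "c * u \<le> c"
          using adm_range[OF adm_initial[OF c(1,2)]] u c by (auto simp: mult_left_le)
        then show "r (c * u) = r1 (c * u)" using le adm_mono[OF a, of "c * u" c] c by auto
      qed
      show "(\<lambda>u. r (c + u * (1 - c))) \<in> D" using D_reparam[OF r2 adm_final[OF c(1,2)]]
      proof (rule D_agree)
        fix u :: real assume u: "u \<in> {0..1}"
        have "c + u * (1 - c) \<in> {0..1}" "c \<le> c + u * (1 - c)"
          using adm_range[OF adm_final[OF c(1,2)]] u c by auto
        then show "r (c + u * (1 - c)) = r2 (c + u * (1 - c))"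
          using ge adm_mono[OF a, of c "c + u * (1 - c)"] c by auto
      qed
    qed
  qed
qed

text \<open>A d-map from the directed unit square into \<open>S\<close>: the data of a directed homotopy.\<close>
definition dsq :: "'a set \<Rightarrow> (real \<times> real \<Rightarrow> 'a) \<Rightarrow> bool" where
  "dsq S H \<longleftrightarrow> continuous_map (top_of_set ({0..1} \<times> {0..1})) (subtopology X S) H \<and>
     (\<forall>a b. adm a \<and> adm b \<longrightarrow> (\<lambda>t. H (a t, b t)) \<in> dpaths D S)"

lemma dhtp_iff: "dhtp X D S p q \<longleftrightarrow> (\<exists>H. dsq S H \<and>
     (\<forall>t\<in>{0..1}. H (t, 0) = p t \<and> H (t, 1) = q t) \<and>
     (\<forall>s\<in>{0..1}. H (0, s) = p 0 \<and> H (1, s) = p 1))"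
  unfolding dhtp_def dsq_def adm_def by (simp only: conj_assoc)

lemma dsq_mono: "dsq S H \<Longrightarrow> S \<subseteq> S' \<Longrightarrow> dsq S' H"
  unfolding dsq_def continuous_map_in_subtopology using dp_mono by blast

lemma dsq_reparam:
  assumes p: "p \<in> dpaths D S"
    and c: "continuous_on ({0..1} \<times> {0..1}) \<Phi>"
    and r: "\<And>t s. t \<in> {0..1} \<Longrightarrow> s \<in> {0..1} \<Longrightarrow> \<Phi> (t, s) \<in> {0..1}"
    and m: "\<And>t t' s s'. 0 \<le> t \<Longrightarrow> t \<le> t' \<Longrightarrow> t' \<le> 1 \<Longrightarrow> 0 \<le> s \<Longrightarrow> s \<le> s' \<Longrightarrow> s' \<le> 1
              \<Longrightarrow> \<Phi> (t, s) \<le> \<Phi> (t', s')"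
  shows "dsq S (\<lambda>z. p (\<Phi> z))"
  unfolding dsq_def
proof (intro conjI allI impI)
  have 1: "continuous_map (top_of_set ({0..1} \<times> {0..1})) (top_of_set {0..1}) \<Phi>"
    unfolding continuous_map_subtopology_eu using c r by (auto simp: image_subset_iff sq_mem)
  have 2: "continuous_map (top_of_set {0..1}) (subtopology X S) p"
    using p D_cont unfolding dpaths_def by (auto simp: continuous_map_in_subtopology)
  show "continuous_map (top_of_set ({0..1} \<times> {0..1})) (subtopology X S) (\<lambda>z. p (\<Phi> z))"
    using continuous_map_compose[OF 1 2] by (simp add: o_def)
next
  fix a b assume ab: "adm a \<and> adm b"
  have range: "a t \<in> {0..1}" "b t \<in> {0..1}" if "t \<in> {0..1}" for t
    using adm_range[of a t] adm_range[of b t] ab that by auto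
  have "adm (\<lambda>t. \<Phi> (a t, b t))"
  proof (rule admI)
    have "continuous_on {0..1} (\<lambda>t. (a t, b t))"
      using ab adm_cont by (auto intro: continuous_intros)
    moreover have "(\<lambda>t. (a t, b t)) ` {0..1} \<subseteq> {0..1} \<times> {0..1}" using range by auto
    ultimately show "continuous_on {0..1} (\<lambda>t. \<Phi> (a t, b t))"
      by (rule continuous_on_compose2[OF c])
    show "\<Phi> (a t, b t) \<in> {0..1}" if "t \<in> {0..1}" for t using r range that by auto
    show "\<Phi> (a s, b s) \<le> \<Phi> (a t, b t)" if "0 \<le> s" "s \<le> t" "t \<le> 1" for s t
      using m[of "a s" "a t" "b s" "b t"] range[of s] range[of t] that
        adm_mono[of a s t] adm_mono[of b s t] ab by auto
  qed
  then show "(\<lambda>t. p (\<Phi> (a t, b t))) \<in> dpaths D S" using dp_reparam[OF p] by blast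
qed

lemma dsq_paste:
  assumes H1: "dsq S H1" and H2: "dsq S H2" and E: "\<And>s. s \<in> {0..1} \<Longrightarrow> H1 (1, s) = H2 (0, s)"
  shows "dsq S (paste H1 H2)"
  unfolding dsq_def
proof (intro conjI allI impI)
  show "continuous_map (top_of_set ({0..1} \<times> {0..1})) (subtopology X S) (paste H1 H2)"
    by (rule continuous_map_paste) (use H1 H2 E in \<open>auto simp: dsq_def\<close>)
next
  fix a b assume ab: "adm a \<and> adm b"
  let ?r = "\<lambda>t. paste H1 H2 (a t, b t)"
  let ?r1 = "\<lambda>t. H1 (min (2 * a t) 1, b t)" and ?r2 = "\<lambda>t. H2 (max (2 * a t - 1) 0, b t)"
  have r1: "?r1 \<in> dpaths D S"
    using H1 adm_comp[OF adm_first_half, of a] ab unfolding dsq_def by auto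
  have r2: "?r2 \<in> dpaths D S"
    using H2 adm_comp[OF adm_second_half, of a] ab unfolding dsq_def by auto
  have le: "?r t = ?r1 t" if "a t \<le> 1/2" for t
    using that by (simp add: paste_def)
  have ge: "?r t = ?r2 t" if "t \<in> {0..1}" "1/2 \<le> a t" for t
  proof (cases "a t \<le> 1/2")
    case True
    then have "min (2 * a t) 1 = 1" "max (2 * a t - 1) 0 = 0" using that by auto
    moreover have "b t \<in> {0..1}" using adm_range[of b t] ab that by auto
    ultimately show ?thesis using E[of "b t"] True by (simp add: paste_def)
  qed (simp add: paste_def)
  have "?r \<in> D"
    by (rule D_threshold_glue[of a ?r1 ?r2]) (use ab r1 r2 le ge in \<open>auto simp: dpaths_def\<close>)
  moreover have "?r t \<in> S" if "t \<in> {0..1}" for t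
    using le ge dp_pt[OF r1 that] dp_pt[OF r2 that] that by (cases "a t \<le> 1/2") auto
  ultimately show "?r \<in> dpaths D S" unfolding dpaths_def by auto
qed

text \<open>Reparametrisations \<open>\<phi>\<^sub>1 \<le> \<phi>\<^sub>2\<close> with common endpoints give directed-homotopic dipaths
  (via the straight-line homotopy between the parameters).\<close>
lemma dhtp_reparam:
  assumes p: "p \<in> dpaths D S" and a1: "adm \<phi>1" and a2: "adm \<phi>2"
    and le: "\<And>t. t \<in> {0..1} \<Longrightarrow> \<phi>1 t \<le> \<phi>2 t"
    and e0: "\<phi>1 0 = \<phi>2 0" and e1: "\<phi>1 1 = \<phi>2 1"
  shows "dhtp X D S (\<lambda>t. p (\<phi>1 t)) (\<lambda>t. p (\<phi>2 t))"
  unfolding dhtp_iff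
proof (intro exI conjI ballI)
  let ?\<Phi> = "\<lambda>z. (1 - snd z) * \<phi>1 (fst z) + snd z * \<phi>2 (fst z)"
  show "dsq S (\<lambda>z. p (?\<Phi> z))"
  proof (rule dsq_reparam[OF p])
    have "continuous_on ({0..1} \<times> {0..1}) (\<lambda>z. \<phi>1 (fst z))"
      using adm_cont[OF a1] by (rule continuous_on_compose2) (auto intro: continuous_intros)
    moreover have "continuous_on ({0..1} \<times> {0..1}) (\<lambda>z. \<phi>2 (fst z))"
      using adm_cont[OF a2] by (rule continuous_on_compose2) (auto intro: continuous_intros)
    ultimately show "continuous_on ({0..1} \<times> {0..1}) ?\<Phi>"
      by (intro continuous_intros) auto
    show "?\<Phi> (t, s) \<in> {0..1}" if "t \<in> {0..1}" "s \<in> {0..1}" for t s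
    proof -
      have "0 \<le> \<phi>1 t" "\<phi>1 t \<le> 1" "0 \<le> \<phi>2 t" "\<phi>2 t \<le> 1" "0 \<le> s" "s \<le> 1"
        using adm_range[OF a1] adm_range[OF a2] that by auto
      moreover from this have "(1 - s) * \<phi>1 t + s * \<phi>2 t \<le> (1 - s) * 1 + s * 1"
        by (intro add_mono mult_left_mono) auto
      ultimately show ?thesis by simp
    qed
    show "?\<Phi> (t, s) \<le> ?\<Phi> (t', s')"
      if "0 \<le> t" "t \<le> t'" "t' \<le> 1" "0 \<le> s" "s \<le> s'" "s' \<le> 1" for t t' s s'
    proof -
      have "\<phi>1 t \<le> \<phi>1 t'" "\<phi>2 t \<le> \<phi>2 t'" using adm_mono a1 a2 that by auto
      hence "(1 - s) * \<phi>1 t + s * \<phi>2 t \<le> (1 - s) * \<phi>1 t' + s * \<phi>2 t'"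
        using that by (intro add_mono mult_left_mono) auto
      also have "\<dots> \<le> (1 - s') * \<phi>1 t' + s' * \<phi>2 t'"
      proof -
        have "0 \<le> (s' - s) * (\<phi>2 t' - \<phi>1 t')" using le[of t'] that by auto
        thus ?thesis by (simp add: algebra_simps)
      qed
      finally show ?thesis by simp
    qed
  qed
  show "p (?\<Phi> (t, 0)) = p (\<phi>1 t)" "p (?\<Phi> (t, 1)) = p (\<phi>2 t)" for t by simp_all
  have cvx: "(1 - s) * x + s * x = x" for s x :: real by (simp add: algebra_simps)
  show "p (?\<Phi> (0, s)) = p (\<phi>1 0)" "p (?\<Phi> (1, s)) = p (\<phi>1 1)" for s
    using cvx[of s "\<phi>2 0"] cvx[of s "\<phi>2 1"] by (simp_all add: e0 e1)
qed

lemma dhtp_refl: "p \<in> dpaths D S \<Longrightarrow> dhtp X D S p p"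
  using dhtp_reparam[OF _ adm_id adm_id] by simp

lemma dhtp_mono: "dhtp X D S p q \<Longrightarrow> S \<subseteq> S' \<Longrightarrow> dhtp X D S' p q"
  unfolding dhtp_iff using dsq_mono by blast

lemma dhtp_paths:
  assumes "dhtp X D S p q"
  shows "p \<in> dpaths D S \<and> q \<in> dpaths D S \<and> q 0 = p 0 \<and> q 1 = p 1"
proof -
  obtain H where H: "dsq S H" "\<forall>t\<in>{0..1}. H (t, 0) = p t \<and> H (t, 1) = q t"
      "\<forall>s\<in>{0..1}. H (0, s) = p 0 \<and> H (1, s) = p 1"
    using assms unfolding dhtp_iff by auto
  have "(\<lambda>t. H (t, 0)) \<in> dpaths D S" "(\<lambda>t. H (t, 1)) \<in> dpaths D S"
    using H(1) adm_id adm_const[of 0] adm_const[of 1] unfolding dsq_def by auto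
  then have "p \<in> dpaths D S" "q \<in> dpaths D S"
    using dp_agree[of "\<lambda>t. H (t, 0)" S p] dp_agree[of "\<lambda>t. H (t, 1)" S q] H(2) by auto
  moreover have "q 0 = p 0" "q 1 = p 1"
    using H(2,3) by (metis atLeastAtMost_iff order_refl zero_le_one)+
  ultimately show ?thesis by auto
qed

lemma dhtp_concat:
  assumes hp: "dhtp X D S p p'" and hq: "dhtp X D S q q'" and e: "p 1 = q 0"
  shows "dhtp X D S (dconcat p q) (dconcat p' q')"
proof -
  obtain H where H: "dsq S H" "\<forall>t\<in>{0..1}. H (t, 0) = p t \<and> H (t, 1) = p' t"
      "\<forall>s\<in>{0..1}. H (0, s) = p 0 \<and> H (1, s) = p 1"
    using hp unfolding dhtp_iff by auto
  obtain K where K: "dsq S K" "\<forall>t\<in>{0..1}. K (t, 0) = q t \<and> K (t, 1) = q' t"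
      "\<forall>s\<in>{0..1}. K (0, s) = q 0 \<and> K (1, s) = q 1"
    using hq unfolding dhtp_iff by auto
  have edges: "paste H K (t, s) = (if t \<le> 1/2 then H (2 * t, s) else K (2 * t - 1, s))"
    if "t \<in> {0..1}" for t s
    using that by (auto simp: paste_def min_def max_def)
  show ?thesis unfolding dhtp_iff
  proof (intro exI[of _ "paste H K"] conjI ballI)
    show "dsq S (paste H K)" by (rule dsq_paste[OF H(1) K(1)]) (use H(3) K(3) e in auto)
    show "paste H K (t, 0) = dconcat p q t" "paste H K (t, 1) = dconcat p' q' t"
      if "t \<in> {0..1}" for t
      using H(2) K(2) that by (auto simp: edges dconcat_def)
    show "paste H K (0, s) = dconcat p q 0" "paste H K (1, s) = dconcat p q 1"
      if "s \<in> {0..1}" for s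
      using H(3) K(3) that by (auto simp: edges dconcat_def)
  qed
qed

section \<open>The fundamental category\<close>

lemma dequiv_sym: "dequiv X D S p q \<Longrightarrow> dequiv X D S q p"
  unfolding dequiv_def by (induction rule: rtranclp.induct)
    (auto intro: converse_rtranclp_into_rtranclp)

lemma dequiv_trans: "dequiv X D S p q \<Longrightarrow> dequiv X D S q r \<Longrightarrow> dequiv X D S p r"
  unfolding dequiv_def by (rule rtranclp_trans)

lemma dequiv_refl: "dequiv X D S p p"
  unfolding dequiv_def by simp

lemma dhtp_dequiv: "dhtp X D S p q \<Longrightarrow> dequiv X D S p q"
  unfolding dequiv_def by (rule r_into_rtranclp) simp

lemma dequiv_paths:
  "dequiv X D S p q \<Longrightarrow> p \<in> dpaths D S \<Longrightarrow> q \<in> dpaths D S \<and> q 0 = p 0 \<and> q 1 = p 1"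
  unfolding dequiv_def
proof (induction rule: rtranclp.induct)
  case (rtrancl_into_rtrancl a b c)
  then show ?case using dhtp_paths by metis
qed simp

lemma dequiv_mono: "dequiv X D S p q \<Longrightarrow> S \<subseteq> S' \<Longrightarrow> dequiv X D S' p q"
  unfolding dequiv_def
  by (erule rtranclp_mono[THEN predicate2D, rotated]) (auto intro: dhtp_mono)

lemma dequiv_congr:
  assumes pp': "dequiv X D S p p'" and p: "p \<in> dpaths D S"
    and step: "\<And>a b. dhtp X D S a b \<Longrightarrow> a 0 = p 0 \<Longrightarrow> a 1 = p 1 \<Longrightarrow> dequiv X D S' (F a) (F b)"
  shows "dequiv X D S' (F p) (F p')"
  using pp'[unfolded dequiv_def]
proof (induction rule: rtranclp_induct)
  case base show ?case by (rule dequiv_refl)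
next
  case (step b c)
  have b: "b 0 = p 0" "b 1 = p 1"
    using dequiv_paths[OF step(1)[folded dequiv_def] p] by auto
  have "dequiv X D S' (F b) (F c)"
  proof (cases "dhtp X D S b c")
    case True then show ?thesis using step.prems b \<open>dhtp X D S b c\<close> by (intro assms(3)) auto
  next
    case False
    then have h: "dhtp X D S c b" using step(2) by simp
    then have "c 0 = p 0" "c 1 = p 1" using dhtp_paths[OF h] b by auto
    then show ?thesis using dequiv_sym assms(3)[OF h] by blast
  qed
  then show ?case by (rule dequiv_trans[OF step(3)])
qed

lemma dequiv_concat:
  assumes pp': "dequiv X D S p p'" and qq': "dequiv X D S q q'"
    and p: "p \<in> dpaths D S" and q: "q \<in> dpaths D S" and e: "p 1 = q 0"
  shows "dequiv X D S (dconcat p q) (dconcat p' q')"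
proof -
  have p': "p' \<in> dpaths D S" "p' 1 = q 0" using dequiv_paths[OF pp' p] e by auto
  have left: "dequiv X D S (dconcat p q) (dconcat p' q)"
    using pp' p by (rule dequiv_congr) (use e dhtp_concat dhtp_refl[OF q] dhtp_dequiv in metis)
  have right: "dequiv X D S (dconcat p' q) (dconcat p' q')"
    using qq' q by (rule dequiv_congr) (use p' dhtp_concat dhtp_refl dhtp_dequiv in metis)
  show ?thesis by (rule dequiv_trans[OF left right])
qed

text \<open>Reparametrising by an endpoint-fixing admissible map does not change the class:
  both \<open>p\<close> and \<open>p \<circ> \<phi>\<close> are directed-homotopic to \<open>p \<circ> max id \<phi>\<close>.\<close>
lemma dequiv_reparam:
  assumes p: "p \<in> dpaths D S" and a: "adm \<phi>" and e: "\<phi> 0 = 0" "\<phi> 1 = 1"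
  shows "dequiv X D S p (\<lambda>t. p (\<phi> t))"
proof -
  let ?\<psi> = "\<lambda>t. max t (\<phi> t)"
  have a2: "adm ?\<psi>"
  proof (rule admI)
    show "continuous_on {0..1} ?\<psi>" using adm_cont[OF a] by (intro continuous_intros)
    show "?\<psi> t \<in> {0..1}" if "t \<in> {0..1}" for t using adm_range[OF a, of t] that by auto
    show "?\<psi> s \<le> ?\<psi> t" if "0 \<le> s" "s \<le> t" "t \<le> 1" for s t
      using adm_mono[OF a, of s t] that by (intro max.mono) auto
  qed
  have "dhtp X D S (\<lambda>t. p ((\<lambda>t. t) t)) (\<lambda>t. p (?\<psi> t))"
    by (rule dhtp_reparam[OF p adm_id a2]) (use e in auto)
  then have 1: "dequiv X D S p (\<lambda>t. p (?\<psi> t))" using dhtp_dequiv by simp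
  have "dhtp X D S (\<lambda>t. p (\<phi> t)) (\<lambda>t. p (?\<psi> t))"
    by (rule dhtp_reparam[OF p a a2]) (use e in auto)
  then have 2: "dequiv X D S (\<lambda>t. p (\<phi> t)) (\<lambda>t. p (?\<psi> t))" by (rule dhtp_dequiv)
  show ?thesis by (rule dequiv_trans[OF 1 dequiv_sym[OF 2]])
qed

lemma cls_self: "p \<in> dpaths D S \<Longrightarrow> p \<in> dcls X D S p"
  unfolding dcls_def using dequiv_refl by auto

lemma cls_eq: "p \<in> dpaths D S \<Longrightarrow> dequiv X D S p q \<Longrightarrow> dcls X D S q = dcls X D S p"
  unfolding dcls_def using dequiv_trans dequiv_sym by blast

lemma cls_mem: "p \<in> dpaths D S \<Longrightarrow> q \<in> dcls X D S p \<Longrightarrow>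
    dequiv X D S p q \<and> q \<in> dpaths D S \<and> q 0 = p 0 \<and> q 1 = p 1"
  unfolding dcls_def using dequiv_paths by blast

lemma dhomE:
  assumes "f \<in> dhom X D S a b"
  obtains p where "p \<in> dpaths D S" "p 0 = a" "p 1 = b" "f = dcls X D S p"
  using assms unfolding dhom_def by auto

lemma dhomI: "p \<in> dpaths D S \<Longrightarrow> dcls X D S p \<in> dhom X D S (p 0) (p 1)"
  unfolding dhom_def by auto

lemma hom_uniq: "f \<in> dhom X D S a b \<Longrightarrow> f \<in> dhom X D S a' b' \<Longrightarrow> a = a' \<and> b = b'"
proof -
  assume "f \<in> dhom X D S a b" "f \<in> dhom X D S a' b'"
  then obtain p q where p: "p \<in> dpaths D S" "p 0 = a" "p 1 = b" "f = dcls X D S p"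
    and q: "q \<in> dpaths D S" "q 0 = a'" "q 1 = b'" "f = dcls X D S q"
    by (metis dhomE)
  have "p \<in> dcls X D S q" using cls_self[OF p(1)] p(4) q(4) by simp
  then show ?thesis using cls_mem[OF q(1)] p q by auto
qed

lemma dcomp_cls:
  assumes p: "p \<in> dpaths D S" and q: "q \<in> dpaths D S" and e: "p 1 = q 0"
  shows "dcomp X D S (dcls X D S q) (dcls X D S p) = dcls X D S (dconcat p q)"
proof -
  let ?p = "SOME x. x \<in> dcls X D S p" and ?q = "SOME x. x \<in> dcls X D S q"
  have "?p \<in> dcls X D S p" "?q \<in> dcls X D S q"
    using someI[of "\<lambda>x. x \<in> dcls X D S p" p] someI[of "\<lambda>x. x \<in> dcls X D S q" q]
      cls_self[OF p] cls_self[OF q] by auto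
  then have "dequiv X D S p ?p" "dequiv X D S q ?q" using cls_mem p q by blast+
  then have "dequiv X D S (dconcat p q) (dconcat ?p ?q)" using dequiv_concat p q e by blast
  then show ?thesis unfolding dcomp_def by (rule cls_eq[OF dp_concat[OF p q e]])
qed

lemma cat_hom:
  assumes f: "f \<in> dhom X D S a b" and g: "g \<in> dhom X D S b c"
  shows "dcomp X D S g f \<in> dhom X D S a c"
proof -
  obtain p where p: "p \<in> dpaths D S" "p 0 = a" "p 1 = b" "f = dcls X D S p" using f by (rule dhomE)
  obtain q where q: "q \<in> dpaths D S" "q 0 = b" "q 1 = c" "g = dcls X D S q" using g by (rule dhomE)
  show ?thesis
    using dcomp_cls dhomI[OF dp_concat[of p S q]] p q by (simp add: dconcat_def)
qed

lemma cat_assoc: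
  assumes f: "f \<in> dhom X D S a b" and g: "g \<in> dhom X D S b c" and h: "h \<in> dhom X D S c d"
  shows "dcomp X D S h (dcomp X D S g f) = dcomp X D S (dcomp X D S h g) f"
proof -
  obtain p where p: "p \<in> dpaths D S" "p 0 = a" "p 1 = b" "f = dcls X D S p" using f by (rule dhomE)
  obtain q where q: "q \<in> dpaths D S" "q 0 = b" "q 1 = c" "g = dcls X D S q" using g by (rule dhomE)
  obtain r where r: "r \<in> dpaths D S" "r 0 = c" "r 1 = d" "h = dcls X D S r" using h by (rule dhomE)
  have pq: "dconcat p q \<in> dpaths D S" "dconcat p q 1 = r 0" using dp_concat p q r by (auto simp: dconcat_def)
  have qr: "dconcat q r \<in> dpaths D S" "p 1 = dconcat q r 0" using dp_concat p q r by (auto simp: dconcat_def)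
  have L: "dcomp X D S h (dcomp X D S g f) = dcls X D S (dconcat (dconcat p q) r)"
    using dcomp_cls p q r pq by simp
  have R: "dcomp X D S (dcomp X D S h g) f = dcls X D S (dconcat p (dconcat q r))"
    using dcomp_cls p q r qr by simp
  txt \<open>The two bracketings differ by the piecewise linear reparametrisation \<open>\<phi>\<close>.\<close>
  let ?\<phi> = "\<lambda>t::real. min (2 * t) (min (t + 1/4) (t / 2 + 1/2))"
  have a: "adm ?\<phi>" by (rule admI) (auto intro!: continuous_intros)
  have eq: "dconcat (dconcat p q) r = (\<lambda>t. dconcat p (dconcat q r) (?\<phi> t))"
  proof
    fix t :: real
    show "dconcat (dconcat p q) r t = dconcat p (dconcat q r) (?\<phi> t)"
      by (cases "t \<le> 1/4"; cases "t \<le> 1/2") (auto simp: dconcat_def min_def algebra_simps)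
  qed
  have "dequiv X D S (dconcat p (dconcat q r)) (dconcat (dconcat p q) r)"
    unfolding eq by (rule dequiv_reparam[OF dp_concat[OF p(1) qr(1) qr(2)] a]) auto
  then show ?thesis using L R cls_eq dp_concat[OF p(1) qr(1) qr(2)] by simp
qed

lemma did_hom: "a \<in> topspace X \<Longrightarrow> a \<in> S \<Longrightarrow> did X D S a \<in> dhom X D S a a"
  unfolding did_def using dhomI[OF dp_const, of a S] by simp

lemma cat_idl:
  assumes f: "f \<in> dhom X D S a b"
  shows "dcomp X D S (did X D S b) f = f"
proof -
  obtain p where p: "p \<in> dpaths D S" "p 0 = a" "p 1 = b" "f = dcls X D S p" using f by (rule dhomE)
  have c: "(\<lambda>t. b) \<in> dpaths D S" using dp_const dp_pt[OF p(1), of 1] p by auto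
  have eq: "dconcat p (\<lambda>t. b) = (\<lambda>t. p (min (2 * t) 1))"
    using p by (auto simp: dconcat_def min_def)
  have "dequiv X D S p (dconcat p (\<lambda>t. b))"
    unfolding eq by (rule dequiv_reparam[OF p(1) adm_first_half]) auto
  then show ?thesis unfolding did_def using dcomp_cls[OF p(1) c] p cls_eq by simp
qed

lemma cat_idr:
  assumes f: "f \<in> dhom X D S a b"
  shows "dcomp X D S f (did X D S a) = f"
proof -
  obtain p where p: "p \<in> dpaths D S" "p 0 = a" "p 1 = b" "f = dcls X D S p" using f by (rule dhomE)
  have c: "(\<lambda>t. a) \<in> dpaths D S" using dp_const dp_pt[OF p(1), of 0] p by auto
  have eq: "dconcat (\<lambda>t. a) p = (\<lambda>t. p (max (2 * t - 1) 0))"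
    using p by (auto simp: dconcat_def max_def)
  have "dequiv X D S p (dconcat (\<lambda>t. a) p)"
    unfolding eq by (rule dequiv_reparam[OF p(1) adm_second_half]) auto
  then show ?thesis unfolding did_def using dcomp_cls[OF c p(1)] p cls_eq by simp
qed

lemma cls_split:
  assumes p: "p \<in> dpaths D S" and c: "0 \<le> c" "c \<le> 1"
  shows "dcls X D S p =
    dcomp X D S (dcls X D S (\<lambda>u. p (c + u * (1 - c)))) (dcls X D S (\<lambda>u. p (c * u)))"
proof -
  let ?p1 = "\<lambda>u. p (c * u)" and ?p2 = "\<lambda>u. p (c + u * (1 - c))"
  let ?\<psi> = "\<lambda>u. c * min (2 * u) 1 + (1 - c) * max (2 * u - 1) 0"
  have a: "adm ?\<psi>"
  proof (rule admI)
    show "continuous_on {0..1} ?\<psi>" by (intro continuous_intros)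
    show "?\<psi> u \<in> {0..1}" if "u \<in> {0..1}" for u
      using that c convex_bound_le[of "min (2 * u) 1" 1 "max (2 * u - 1) 0" c "1 - c"] by auto
    show "?\<psi> s \<le> ?\<psi> u" if "0 \<le> s" "s \<le> u" "u \<le> 1" for s u
      using that c by (intro add_mono mult_left_mono) auto
  qed
  have "dconcat ?p1 ?p2 = (\<lambda>u. p (?\<psi> u))"
    by (auto simp: dconcat_def min_def max_def algebra_simps)
  moreover have "dequiv X D S p (\<lambda>u. p (?\<psi> u))" by (rule dequiv_reparam[OF p a]) simp_all
  ultimately show ?thesis
    using dcomp_cls[OF dp_reparam[OF p adm_initial[OF c]] dp_reparam[OF p adm_final[OF c]]]
      cls_eq[OF p] by simp
qed

section \<open>Functors induced by inclusions of subspaces\<close>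

lemma dincl_cls:
  assumes p: "p \<in> dpaths D S" and S: "S \<subseteq> S'"
  shows "dincl X D S' (dcls X D S p) = dcls X D S' p"
proof -
  have "dequiv X D S' p p'" if "p' \<in> dcls X D S p" for p'
    using cls_mem[OF p that] dequiv_mono S by blast
  then show ?thesis
    using cls_self[OF p] dequiv_trans unfolding dincl_def dcls_def by blast
qed

lemma dincl_hom: assumes "f \<in> dhom X D S a b" "S \<subseteq> S'" shows "dincl X D S' f \<in> dhom X D S' a b"
proof -
  obtain p where p: "p \<in> dpaths D S" "p 0 = a" "p 1 = b" "f = dcls X D S p" using assms(1) by (rule dhomE)
  show ?thesis using dincl_cls[OF p(1) assms(2)] dhomI[OF dp_mono[OF p(1) assms(2)]] p by simp
qed

lemma dincl_dincl:
  assumes "f \<in> dhom X D S a b" "S \<subseteq> S'" "S' \<subseteq> S''"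
  shows "dincl X D S'' (dincl X D S' f) = dincl X D S'' f"
proof -
  obtain p where p: "p \<in> dpaths D S" "f = dcls X D S p" using assms(1) by (rule dhomE)
  show ?thesis
    using dincl_cls[OF p(1)] dincl_cls[OF dp_mono[OF p(1) assms(2)] assms(3)] assms(2,3) p(2)
    by (metis order_trans)
qed

lemma dincl_compatible:
  assumes u: "u \<in> dhom X D S0 a b" and S: "S0 \<subseteq> S1" "S0 \<subseteq> S2" "S1 \<subseteq> S" "S2 \<subseteq> S"
  shows "dincl X D S (dincl X D S1 u) = dincl X D S (dincl X D S2 u)"
  using dincl_dincl[OF u S(1,3)] dincl_dincl[OF u S(2,4)] by simp

lemma dincl_comp:
  assumes f: "f \<in> dhom X D S a b" and g: "g \<in> dhom X D S b c" and S: "S \<subseteq> S'"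
  shows "dincl X D S' (dcomp X D S g f) = dcomp X D S' (dincl X D S' g) (dincl X D S' f)"
proof -
  obtain p where p: "p \<in> dpaths D S" "p 0 = a" "p 1 = b" "f = dcls X D S p" using f by (rule dhomE)
  obtain q where q: "q \<in> dpaths D S" "q 0 = b" "q 1 = c" "g = dcls X D S q" using g by (rule dhomE)
  show ?thesis
    using dcomp_cls p q dp_concat[OF p(1) q(1)] dincl_cls[OF _ S] dp_mono[OF _ S] by simp
qed

lemma dincl_did: "a \<in> topspace X \<Longrightarrow> a \<in> S \<Longrightarrow> S \<subseteq> S' \<Longrightarrow> dincl X D S' (did X D S a) = did X D S' a"
  unfolding did_def by (rule dincl_cls[OF dp_const])

end

section \<open>A criterion for future retracts\<close>

locale functor_with_unit = d_space +
  fixes S B A :: "'a set" and Fo :: "'a \<Rightarrow> 'a"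
    and Fm :: "(real \<Rightarrow> 'a) set \<Rightarrow> (real \<Rightarrow> 'a) set" and \<eta> :: "'a \<Rightarrow> (real \<Rightarrow> 'a) set"
  assumes is_functor: "dfunctor X D S B S A Fo Fm"
    and unit_hom: "\<And>x. x \<in> B \<Longrightarrow> \<eta> x \<in> dhom X D S x (Fo x)"
    and AB: "A \<subseteq> B" and BS: "B \<subseteq> S" and ST: "S \<subseteq> topspace X"
begin

lemma F_obj: "x \<in> B \<Longrightarrow> Fo x \<in> A"
  using is_functor unfolding dfunctor_def by blast

lemma F_hom: "x \<in> B \<Longrightarrow> y \<in> B \<Longrightarrow> f \<in> dhom X D S x y \<Longrightarrow> Fm f \<in> dhom X D S (Fo x) (Fo y)"
  using is_functor unfolding dfunctor_def by blast

lemma F_comp: "x \<in> B \<Longrightarrow> y \<in> B \<Longrightarrow> z \<in> B \<Longrightarrow> f \<in> dhom X D S x y \<Longrightarrow> g \<in> dhom X D S y z \<Longrightarrow>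
    Fm (dcomp X D S g f) = dcomp X D S (Fm g) (Fm f)"
  using is_functor unfolding dfunctor_def by blast

lemma did_hom_B: "x \<in> B \<Longrightarrow> did X D S x \<in> dhom X D S x x"
  using did_hom BS ST by blast

lemma unit_identity_fixes: "a \<in> A \<Longrightarrow> \<eta> a = did X D S a \<Longrightarrow> Fo a = a"
  using unit_hom[of a] did_hom_B[of a] AB hom_uniq by (metis subsetD)

definition natural_arrow :: "(real \<Rightarrow> 'a) set \<Rightarrow> 'a \<Rightarrow> 'a \<Rightarrow> bool" where
  "natural_arrow G u v \<longleftrightarrow> u \<in> B \<and> v \<in> B \<and> G \<in> dhom X D S u v \<and>
     dcomp X D S (Fm G) (\<eta> u) = dcomp X D S (\<eta> v) G"

lemma natural_arrow_comp:
  assumes G: "natural_arrow G u v" and G': "natural_arrow G' v w"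
  shows "natural_arrow (dcomp X D S G' G) u w"
proof -
  have h: "G \<in> dhom X D S u v" "u \<in> B" "v \<in> B"
      "dcomp X D S (Fm G) (\<eta> u) = dcomp X D S (\<eta> v) G"
    and h': "G' \<in> dhom X D S v w" "w \<in> B" "dcomp X D S (Fm G') (\<eta> v) = dcomp X D S (\<eta> w) G'"
    using G G' unfolding natural_arrow_def by auto
  have FG: "Fm G \<in> dhom X D S (Fo u) (Fo v)" and FG': "Fm G' \<in> dhom X D S (Fo v) (Fo w)"
    using F_hom h h' by blast+
  have "dcomp X D S (Fm (dcomp X D S G' G)) (\<eta> u)
      = dcomp X D S (dcomp X D S (Fm G') (Fm G)) (\<eta> u)"
    using F_comp h h' by simp
  also have "\<dots> = dcomp X D S (Fm G') (dcomp X D S (\<eta> v) G)"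
    using cat_assoc[OF unit_hom[OF h(2)] FG FG'] h(4) by simp
  also have "\<dots> = dcomp X D S (dcomp X D S (\<eta> w) G') G"
    using cat_assoc[OF h(1) unit_hom[OF h(3)] FG'] h'(3) by simp
  also have "\<dots> = dcomp X D S (\<eta> w) (dcomp X D S G' G)"
    using cat_assoc[OF h(1) h'(1) unit_hom[OF h'(2)]] by simp
  finally show ?thesis unfolding natural_arrow_def using cat_hom[OF h(1) h'(1)] h h' by simp
qed

context
  assumes unit_A: "\<And>a. a \<in> A \<Longrightarrow> \<eta> a = did X D S a"
    and triangle: "\<And>x. x \<in> B \<Longrightarrow> Fm (\<eta> x) = did X D S (Fo x)"
    and natural: "\<And>x y f. x \<in> B \<Longrightarrow> y \<in> B \<Longrightarrow> f \<in> dhom X D S x y \<Longrightarrow>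
                    dcomp X D S (Fm f) (\<eta> x) = dcomp X D S (\<eta> y) f"
begin

text \<open>A natural unit that is the identity on \<open>A\<close> and satisfies the triangle identity is
  universal: \<open>Fm f\<close> is the unique factorisation of \<open>f : x \<rightarrow> a\<close> through \<open>\<eta> x\<close>.\<close>
lemma unit_universal:
  assumes x: "x \<in> B" and a: "a \<in> A" and f: "f \<in> dhom X D S x a"
  shows "\<exists>!g. g \<in> dhom X D S (Fo x) a \<and> dcomp X D S g (\<eta> x) = f"
proof (rule ex1I[of _ "Fm f"])
  have aB: "a \<in> B" and Fa: "Fo a = a" using a AB unit_A unit_identity_fixes by auto
  show "Fm f \<in> dhom X D S (Fo x) a \<and> dcomp X D S (Fm f) (\<eta> x) = f"
    using F_hom[OF x aB f] natural[OF x aB f] Fa unit_A[OF a] cat_idl[OF f] by simp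
  fix g assume g: "g \<in> dhom X D S (Fo x) a \<and> dcomp X D S g (\<eta> x) = f"
  have Fx: "Fo x \<in> A" "Fo x \<in> B" "Fo (Fo x) = Fo x"
    using F_obj[OF x] AB unit_A unit_identity_fixes by auto
  have Fg: "Fm g \<in> dhom X D S (Fo x) a" using F_hom[OF Fx(2) aB] g Fx(3) Fa by auto
  have "Fm g = g"
    using natural[OF Fx(2) aB, of g] g unit_A[OF a] unit_A[OF Fx(1)] cat_idr[OF Fg] cat_idl by auto
  then have "Fm f = dcomp X D S g (Fm (\<eta> x))"
    using g F_comp[OF x Fx(2) aB unit_hom[OF x]] by auto
  then show "g = Fm f" using triangle[OF x] cat_idr g by auto
qed

lemma future_retract_criterion:
  "future_retract X D S B A Fo Fm \<eta> \<and> (\<forall>a\<in>A. adj_counit X D S Fo \<eta> a = did X D S a)"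
proof (intro conjI ballI)
  show "future_retract X D S B A Fo Fm \<eta>"
    unfolding future_retract_def left_adjoint_incl_def
    by (intro conjI ballI) (simp_all add: is_functor unit_hom natural unit_universal unit_A)
  fix a assume a: "a \<in> A"
  then have id: "did X D S a \<in> dhom X D S a a" "Fo a = a"
    using did_hom_B AB unit_A unit_identity_fixes by auto
  have "did X D S a \<in> dhom X D S (Fo a) a \<and> dcomp X D S (did X D S a) (\<eta> a) = did X D S a"
    using id cat_idl unit_A[OF a] by simp
  then show "adj_counit X D S Fo \<eta> a = did X D S a"
    unfolding adj_counit_def using the1_equality[OF unit_universal[OF _ a id(1)]] AB a by auto
qed

end

end

locale fut_retract = d_space +
  fixes S B A :: "'a set" and Fo :: "'a \<Rightarrow> 'a"
    and Fm :: "(real \<Rightarrow> 'a) set \<Rightarrow> (real \<Rightarrow> 'a) set" and \<eta> :: "'a \<Rightarrow> (real \<Rightarrow> 'a) set"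
  assumes fr: "future_retract X D S B A Fo Fm \<eta>"
    and fr_AB: "A \<subseteq> B" and fr_BS: "B \<subseteq> S" and fr_ST: "S \<subseteq> topspace X"

context fut_retract
begin

lemma frD:
  "dfunctor X D S B S A Fo Fm"
  "\<forall>x\<in>B. \<eta> x \<in> dhom X D S x (Fo x)"
  "\<forall>x\<in>B. \<forall>y\<in>B. \<forall>f\<in>dhom X D S x y. dcomp X D S (Fm f) (\<eta> x) = dcomp X D S (\<eta> y) f"
  "\<forall>x\<in>B. \<forall>a\<in>A. \<forall>f\<in>dhom X D S x a. \<exists>!g. g \<in> dhom X D S (Fo x) a \<and> dcomp X D S g (\<eta> x) = f"
  "\<forall>a\<in>A. \<eta> a = did X D S a"
  using fr unfolding future_retract_def left_adjoint_incl_def by simp_all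

end

sublocale fut_retract \<subseteq> functor_with_unit
  using frD(1,2) fr_AB fr_BS fr_ST by unfold_locales simp_all

context fut_retract
begin

lemma fr_nat: "x \<in> B \<Longrightarrow> y \<in> B \<Longrightarrow> f \<in> dhom X D S x y \<Longrightarrow>
    dcomp X D S (Fm f) (\<eta> x) = dcomp X D S (\<eta> y) f"
  using frD(3) by blast

lemma fr_id: "a \<in> A \<Longrightarrow> \<eta> a = did X D S a"
  using frD(5) by blast

lemmas fr_eta = unit_hom and fr_obj = F_obj and fr_hom = F_hom

lemma fr_fix: "a \<in> A \<Longrightarrow> Fo a = a"
  using fr_id unit_identity_fixes by blast

text \<open>The triangle identity \<open>F \<eta> = id\<close>: both sides factor \<open>\<eta> x\<close> through itself.\<close>
lemma fr_tri:
  assumes x: "x \<in> B" shows "Fm (\<eta> x) = did X D S (Fo x)"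
proof -
  have fx: "Fo x \<in> A" "Fo x \<in> B" using F_obj x AB by auto
  have e: "\<eta> x \<in> dhom X D S x (Fo x)" using unit_hom x .
  have U: "\<exists>!g. g \<in> dhom X D S (Fo x) (Fo x) \<and> dcomp X D S g (\<eta> x) = \<eta> x"
    by (rule frD(4)[rule_format, OF x fx(1) e])
  have Fe: "Fm (\<eta> x) \<in> dhom X D S (Fo x) (Fo x) \<and> dcomp X D S (Fm (\<eta> x)) (\<eta> x) = \<eta> x"
    using F_hom[OF x fx(2) e] fr_fix[OF fx(1)] fr_nat[OF x fx(2) e] fr_id[OF fx(1)] cat_idl[OF e]
    by simp
  have ide: "did X D S (Fo x) \<in> dhom X D S (Fo x) (Fo x) \<and> dcomp X D S (did X D S (Fo x)) (\<eta> x) = \<eta> x"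
    using did_hom_B[OF fx(2)] cat_idl[OF e] by simp
  show ?thesis using the1_equality[OF U Fe] the1_equality[OF U ide] by simp
qed

end

section \<open>Induction over a subdivision of a path\<close>

lemma subdivision_increasing:
  "(\<forall>i<n. (t::nat \<Rightarrow> real) i < t (Suc i)) \<Longrightarrow> 0 < m \<Longrightarrow> m \<le> n \<Longrightarrow> t 0 < t m"
proof (induction m)
  case (Suc m)
  then show ?case by (cases "m = 0") (auto intro: less_trans)
qed simp

lemma subdivision_induct:
  fixes P Prim :: "(real \<Rightarrow> 'a) \<Rightarrow> bool" and p :: "real \<Rightarrow> 'a" and t :: "nat \<Rightarrow> real"
  assumes piece: "\<And>q. Prim q \<Longrightarrow> P q"
    and cut: "\<And>q c. 0 < c \<Longrightarrow> c < 1 \<Longrightarrow> P (\<lambda>u. q (c * u)) \<Longrightarrow> P (\<lambda>u. q (c + u * (1 - c))) \<Longrightarrow> P q"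
    and "0 < n" "t 0 = 0" "t n = 1" "\<forall>i<n. t i < t (Suc i)"
    and "\<forall>i<n. Prim (\<lambda>s. p (t i + s * (t (Suc i) - t i)))"
  shows "P p"
  using assms(3-)
proof (induction n arbitrary: p t)
  case (Suc n)
  show ?case
  proof (cases "n = 0")
    case True
    then show ?thesis using piece Suc.prems(2,3,5) by auto
  next
    case False
    define c where "c = t n"
    have c: "0 < c" "c < 1"
      using subdivision_increasing[OF Suc.prems(4), of n] Suc.prems(2-4) False
      unfolding c_def by (auto simp: less_Suc_eq)
    txt \<open>The initial part, rescaled to \<open>[0,1]\<close>, is subdivided by \<open>t i / c\<close> into \<open>n\<close> pieces.\<close>
    have "P (\<lambda>u. p (c * u))"
    proof (rule Suc.IH[where t="\<lambda>i. t i / c"])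
      show "0 < n" "t 0 / c = 0" "t n / c = 1" using False c Suc.prems(2) by (auto simp: c_def)
      show "\<forall>i<n. t i / c < t (Suc i) / c" using Suc.prems(4) c by (auto intro: divide_strict_right_mono)
      have "c * (t i / c + s * (t (Suc i) / c - t i / c)) = t i + s * (t (Suc i) - t i)" for i s
        using c by (simp add: field_simps)
      then show "\<forall>i<n. Prim (\<lambda>s. p (c * (t i / c + s * (t (Suc i) / c - t i / c))))"
        using Suc.prems(5) by simp
    qed
    moreover have "P (\<lambda>u. p (c + u * (1 - c)))"
      using piece Suc.prems(3,5) unfolding c_def by auto
    ultimately show ?thesis by (rule cut[OF c])
  qed
qed simp

text \<open>Choosing, for a point of \<open>S\<^sub>1 \<union> S\<^sub>2\<close>, the first side containing it is harmless when
  the data on both sides agree on the intersection.\<close>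
lemma select_side:
  assumes "k \<in> {1,2::nat}" "x \<in> S k" and "x \<in> S 1 \<Longrightarrow> x \<in> S 2 \<Longrightarrow> F 1 x = F 2 x"
  shows "F (if x \<in> S 1 then 1 else 2) x = F k x"
  using assms by auto

section \<open>Gluing compatible future retracts\<close>

locale glued_retracts = d_space +
  fixes Xk Ak Bk :: "nat \<Rightarrow> 'a set" and A B :: "'a set"
    and Qo Po :: "nat \<Rightarrow> 'a \<Rightarrow> 'a" and Qm Pm :: "nat \<Rightarrow> (real \<Rightarrow> 'a) set \<Rightarrow> (real \<Rightarrow> 'a) set"
    and \<theta> \<eta> :: "nat \<Rightarrow> 'a \<Rightarrow> (real \<Rightarrow> 'a) set"
    and PPo :: "'a \<Rightarrow> 'a" and PPm :: "(real \<Rightarrow> 'a) set \<Rightarrow> (real \<Rightarrow> 'a) set"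
  assumes cover: "topspace X = Xk 1 \<union> Xk 2" and X0: "Xk 0 = Xk 1 \<inter> Xk 2"
    and subdivision: "\<And>p. p \<in> D \<Longrightarrow> \<exists>n t. 0 < n \<and> t 0 = 0 \<and> t n = 1 \<and> (\<forall>i<n. t i < t (Suc i)) \<and>
           (\<forall>i<n. (\<lambda>s. p (t i + s * (t (Suc i) - t i))) \<in> dpaths D (Xk 1) \<union> dpaths D (Xk 2))"
    and nested: "\<And>k. k \<in> {0,1,2} \<Longrightarrow> Ak k \<subseteq> Bk k \<and> Bk k \<subseteq> Xk k"
    and B0: "Bk 0 = Bk 1 \<inter> Bk 2" and A_union: "A = Ak 1 \<union> Ak 2" and B_union: "B = Bk 1 \<union> Bk 2"
    and Q_fr: "\<And>k. k \<in> {0,1,2} \<Longrightarrow> future_retract X D (Xk k) (Xk k) (Bk k) (Qo k) (Qm k) (\<theta> k)"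
    and Q_obj: "\<And>k x. k \<in> {1,2} \<Longrightarrow> x \<in> Xk 0 \<Longrightarrow> Qo k x = Qo 0 x"
    and Q_unit: "\<And>k x. k \<in> {1,2} \<Longrightarrow> x \<in> Xk 0 \<Longrightarrow> dincl X D (Xk k) (\<theta> 0 x) = \<theta> k x"
    and P_fr: "\<And>k. k \<in> {0,1,2} \<Longrightarrow> future_retract X D (Xk k) (Bk k) (Ak k) (Po k) (Pm k) (\<eta> k)"
    and P_unit: "\<And>k x. k \<in> {1,2} \<Longrightarrow> x \<in> Bk 0 \<Longrightarrow> dincl X D (Xk k) (\<eta> 0 x) = \<eta> k x"
    and P_functor: "dfunctor X D (topspace X) B (topspace X) A PPo PPm"
    and P_obj: "\<And>k x. k \<in> {1,2} \<Longrightarrow> x \<in> Bk k \<Longrightarrow> PPo x = Po k x"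
    and P_mor: "\<And>k x y f. k \<in> {1,2} \<Longrightarrow> x \<in> Bk k \<Longrightarrow> y \<in> Bk k \<Longrightarrow> f \<in> dhom X D (Xk k) x y \<Longrightarrow>
                 PPm (dincl X D (topspace X) f) = dincl X D (topspace X) (Pm k f)"
begin

abbreviation T :: "'a set" where "T \<equiv> topspace X"

lemma X_sub: "k \<in> {0,1,2} \<Longrightarrow> Xk k \<subseteq> T"
  using cover X0 by auto

lemma X0_sub: "Xk 0 \<subseteq> Xk 1" "Xk 0 \<subseteq> Xk 2"
  using X0 by auto

lemma nested_chain:
  assumes "k \<in> {0,1,2}" shows "Ak k \<subseteq> Bk k" "Bk k \<subseteq> Xk k" "Xk k \<subseteq> T"
  using nested[OF assms] X_sub[OF assms] by auto

lemma side_B: "x \<in> B \<Longrightarrow> \<exists>k\<in>{1,2}. x \<in> Bk k"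
  using B_union by auto

lemma P_retract: "k \<in> {0,1,2} \<Longrightarrow> fut_retract X D (Xk k) (Bk k) (Ak k) (Po k) (Pm k) (\<eta> k)"
  using P_fr nested_chain by (intro fut_retract.intro d_space.intro fut_retract_axioms.intro dsp)

lemma Q_retract: "k \<in> {0,1,2} \<Longrightarrow> fut_retract X D (Xk k) (Xk k) (Bk k) (Qo k) (Qm k) (\<theta> k)"
  using Q_fr nested_chain by (intro fut_retract.intro d_space.intro fut_retract_axioms.intro dsp) auto

definition glued_unit :: "'a \<Rightarrow> (real \<Rightarrow> 'a) set" where
  "glued_unit = (\<lambda>x. dincl X D T (\<eta> (if x \<in> Bk 1 then 1 else 2) x))"

text \<open>On \<open>B\<^sub>k\<close> the glued unit is the image of the unit of \<open>P\<^sub>k\<close>; on \<open>B\<^sub>0\<close> both choices agree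
  because both units come from the unit of \<open>P\<^sub>0\<close>.\<close>
lemma glued_unit_eq:
  assumes k: "k \<in> {1,2}" "x \<in> Bk k"
  shows "glued_unit x = dincl X D T (\<eta> k x)"
proof -
  have "dincl X D T (\<eta> 1 x) = dincl X D T (\<eta> 2 x)" if "x \<in> Bk 1" "x \<in> Bk 2"
  proof -
    have x0: "x \<in> Bk 0" using that B0 by simp
    then have "\<eta> 0 x \<in> dhom X D (Xk 0) x (Po 0 x)" using fut_retract.fr_eta[OF P_retract] by simp
    from dincl_compatible[OF this X0_sub X_sub[of 1] X_sub[of 2]]
    show ?thesis using P_unit[of 1 x] P_unit[of 2 x] x0 by simp
  qed
  then show ?thesis
    using select_side[where S=Bk and F="\<lambda>k x. dincl X D T (\<eta> k x)"] k unfolding glued_unit_def by simp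
qed

lemma glued_unit_hom: "x \<in> B \<Longrightarrow> glued_unit x \<in> dhom X D T x (PPo x)"
proof -
  assume "x \<in> B"
  then obtain k where k: "k \<in> {1,2}" "x \<in> Bk k" using side_B by blast
  have "\<eta> k x \<in> dhom X D (Xk k) x (Po k x)" using fut_retract.fr_eta[OF P_retract] k by simp
  then show ?thesis using dincl_hom X_sub k glued_unit_eq P_obj by simp
qed

lemma glued_unit_A: "a \<in> A \<Longrightarrow> glued_unit a = did X D T a"
proof -
  assume "a \<in> A"
  then obtain k where k: "k \<in> {1,2}" "a \<in> Ak k" using A_union by auto
  then have a: "a \<in> Bk k" "a \<in> Xk k" "a \<in> T" using nested_chain[of k] by auto
  then show ?thesis
    using glued_unit_eq[OF k(1) a(1)] fut_retract.fr_id[OF P_retract] k dincl_did[OF a(3,2) X_sub] by simp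
qed

lemma glued_triangle: "x \<in> B \<Longrightarrow> PPm (glued_unit x) = did X D T (PPo x)"
proof -
  assume "x \<in> B"
  then obtain k where k: "k \<in> {1,2}" "x \<in> Bk k" using side_B by blast
  then have kk: "k \<in> {0,1,2}" by auto
  have e: "\<eta> k x \<in> dhom X D (Xk k) x (Po k x)" and pa: "Po k x \<in> Ak k"
    using fut_retract.fr_eta[OF P_retract[OF kk] k(2)] fut_retract.fr_obj[OF P_retract[OF kk] k(2)] .
  have pb: "Po k x \<in> Bk k" "Po k x \<in> Xk k" "Po k x \<in> T" using pa nested_chain[OF kk] by auto
  have "PPm (glued_unit x) = dincl X D T (Pm k (\<eta> k x))"
    using glued_unit_eq[OF k] P_mor[OF k(1,2) pb(1) e] by simp
  also have "\<dots> = dincl X D T (did X D (Xk k) (Po k x))"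
    using fut_retract.fr_tri[OF P_retract[OF kk] k(2)] by simp
  also have "\<dots> = did X D T (PPo x)" using dincl_did[OF pb(3,2) X_sub[OF kk]] P_obj[OF k] by simp
  finally show ?thesis .
qed

lemma glued_unit_natural_local:
  assumes k: "k \<in> {1,2}" "b \<in> Bk k" "b' \<in> Bk k" and g: "g \<in> dhom X D (Xk k) b b'"
  shows "dcomp X D T (PPm (dincl X D T g)) (glued_unit b) = dcomp X D T (glued_unit b') (dincl X D T g)"
proof -
  have kk: "k \<in> {0,1,2}" using k by auto
  note Pk = P_retract[OF kk]
  have eb: "\<eta> k b \<in> dhom X D (Xk k) b (Po k b)" and eb': "\<eta> k b' \<in> dhom X D (Xk k) b' (Po k b')"
    and pg: "Pm k g \<in> dhom X D (Xk k) (Po k b) (Po k b')"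
    using fut_retract.fr_eta[OF Pk] fut_retract.fr_hom[OF Pk] k g by auto
  have "dcomp X D T (PPm (dincl X D T g)) (glued_unit b)
      = dincl X D T (dcomp X D (Xk k) (Pm k g) (\<eta> k b))"
    using P_mor[OF k g] glued_unit_eq[OF k(1,2)] dincl_comp[OF eb pg X_sub[OF kk]] by simp
  also have "\<dots> = dincl X D T (dcomp X D (Xk k) (\<eta> k b') g)"
    using fut_retract.fr_nat[OF Pk k(2,3) g] by simp
  also have "\<dots> = dcomp X D T (glued_unit b') (dincl X D T g)"
    using dincl_comp[OF g eb' X_sub[OF kk]] glued_unit_eq[OF k(1,3)] by simp
  finally show ?thesis .
qed

lemma A_sub_B: "A \<subseteq> B" and B_sub_T: "B \<subseteq> T"
  using A_union B_union nested X_sub by blast+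

sublocale glob: functor_with_unit X D T B A PPo PPm glued_unit
proof (unfold_locales)
  show "dfunctor X D T B T A PPo PPm" by (rule P_functor)
  show "\<And>x. x \<in> B \<Longrightarrow> glued_unit x \<in> dhom X D T x (PPo x)" by (rule glued_unit_hom)
qed (fact A_sub_B B_sub_T order_refl)+

definition glued_Q :: "'a \<Rightarrow> 'a" where
  "glued_Q = (\<lambda>z. Qo (if z \<in> Xk 1 then 1 else 2) z)"

definition glued_Q_unit :: "'a \<Rightarrow> (real \<Rightarrow> 'a) set" where
  "glued_Q_unit = (\<lambda>z. dincl X D T (\<theta> (if z \<in> Xk 1 then 1 else 2) z))"

lemma glued_Q_eq:
  assumes j: "j \<in> {1,2}" "z \<in> Xk j"
  shows "glued_Q z = Qo j z \<and> glued_Q_unit z = dincl X D T (\<theta> j z)"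
proof -
  have "Qo 1 z = Qo 2 z \<and> dincl X D T (\<theta> 1 z) = dincl X D T (\<theta> 2 z)" if "z \<in> Xk 1" "z \<in> Xk 2"
  proof -
    have z0: "z \<in> Xk 0" using that X0 by simp
    then have "\<theta> 0 z \<in> dhom X D (Xk 0) z (Qo 0 z)" using fut_retract.fr_eta[OF Q_retract] by simp
    from dincl_compatible[OF this X0_sub X_sub[of 1] X_sub[of 2]]
    show ?thesis using Q_unit[of 1 z] Q_unit[of 2 z] Q_obj[of 1 z] Q_obj[of 2 z] z0 by simp
  qed
  then show ?thesis
    using select_side[where S=Xk and F="\<lambda>k x. Qo k x"]
      select_side[where S=Xk and F="\<lambda>k x. dincl X D T (\<theta> k x)"] j
    unfolding glued_Q_def glued_Q_unit_def by simp
qed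

lemma glued_Q_on_B: "z \<in> B \<Longrightarrow> glued_Q_unit z = did X D T z \<and> glued_Q z = z"
proof -
  assume "z \<in> B"
  then obtain j where j: "j \<in> {1,2}" "z \<in> Bk j" using side_B by blast
  then have jj: "j \<in> {0,1,2}" and z: "z \<in> Xk j" "z \<in> T" using nested_chain[of j] by auto
  show ?thesis
    using glued_Q_eq[OF j(1) z(1)] fut_retract.fr_id[OF Q_retract[OF jj] j(2)] fut_retract.fr_fix[OF Q_retract[OF jj] j(2)]
      dincl_did[OF z(2,1) X_sub[OF jj]] by simp
qed

lemma glued_Q_hom: "z \<in> T \<Longrightarrow> glued_Q_unit z \<in> dhom X D T z (glued_Q z) \<and> glued_Q z \<in> B"
proof -
  assume "z \<in> T"
  then obtain j where j: "j \<in> {1,2}" "z \<in> Xk j" using cover by auto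
  then have jj: "j \<in> {0,1,2}" by auto
  have "\<theta> j z \<in> dhom X D (Xk j) z (Qo j z)" "Qo j z \<in> Bk j"
    using fut_retract.fr_eta[OF Q_retract[OF jj] j(2)] fut_retract.fr_obj[OF Q_retract[OF jj] j(2)] .
  then show ?thesis using glued_Q_eq[OF j] dincl_hom[OF _ X_sub[OF jj]] B_union j(1) by auto
qed

definition tamed :: "(real \<Rightarrow> 'a) \<Rightarrow> bool" where
  "tamed p \<longleftrightarrow> (\<exists>G. glob.natural_arrow G (glued_Q (p 0)) (glued_Q (p 1)) \<and>
     dcomp X D T (glued_Q_unit (p 1)) (dcls X D T p) = dcomp X D T G (glued_Q_unit (p 0)))"

text \<open>Dipaths inside one piece are tamed: push along the naturality square of \<open>Q\<^sub>k\<close>.\<close>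
lemma tamed_piece:
  assumes j: "j \<in> {1,2}" and q: "q \<in> dpaths D (Xk j)"
  shows "tamed q"
proof -
  have jj: "j \<in> {0,1,2}" using j by auto
  note Qj = Q_retract[OF jj]
  have uv: "q 0 \<in> Xk j" "q 1 \<in> Xk j" using dp_pt[OF q, of 0] dp_pt[OF q, of 1] by auto
  let ?f = "dcls X D (Xk j) q"
  let ?G = "dincl X D T (Qm j ?f)"
  have f: "?f \<in> dhom X D (Xk j) (q 0) (q 1)" using dhomI[OF q] .
  have tu: "\<theta> j (q 0) \<in> dhom X D (Xk j) (q 0) (Qo j (q 0))"
    and tv: "\<theta> j (q 1) \<in> dhom X D (Xk j) (q 1) (Qo j (q 1))"
    and bu: "Qo j (q 0) \<in> Bk j" and bv: "Qo j (q 1) \<in> Bk j"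
    using fut_retract.fr_eta[OF Qj] fut_retract.fr_obj[OF Qj] uv by auto
  have g: "Qm j ?f \<in> dhom X D (Xk j) (Qo j (q 0)) (Qo j (q 1))" using fut_retract.fr_hom[OF Qj uv f] .
  have "glob.natural_arrow ?G (glued_Q (q 0)) (glued_Q (q 1))"
    unfolding glob.natural_arrow_def
    using glued_Q_eq[OF j uv(1)] glued_Q_eq[OF j uv(2)] dincl_hom[OF g X_sub[OF jj]]
      B_union j bu bv glued_unit_natural_local[OF j bu bv g] by auto
  moreover have "dcomp X D T (glued_Q_unit (q 1)) (dcls X D T q) = dcomp X D T ?G (glued_Q_unit (q 0))"
  proof -
    have "dcomp X D T (glued_Q_unit (q 1)) (dcls X D T q)
        = dincl X D T (dcomp X D (Xk j) (\<theta> j (q 1)) ?f)"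
      using glued_Q_eq[OF j uv(2)] dincl_cls[OF q X_sub[OF jj]] dincl_comp[OF f tv X_sub[OF jj]] by simp
    also have "\<dots> = dincl X D T (dcomp X D (Xk j) (Qm j ?f) (\<theta> j (q 0)))"
      using fut_retract.fr_nat[OF Qj uv f] by simp
    also have "\<dots> = dcomp X D T ?G (glued_Q_unit (q 0))"
      using dincl_comp[OF tu g X_sub[OF jj]] glued_Q_eq[OF j uv(1)] by simp
    finally show ?thesis .
  qed
  ultimately show ?thesis unfolding tamed_def by blast
qed

lemma tamed_cut:
  assumes p: "p \<in> dpaths D T" and c: "0 \<le> c" "c \<le> 1"
    and init: "tamed (\<lambda>u. p (c * u))" and final: "tamed (\<lambda>u. p (c + u * (1 - c)))"
  shows "tamed p"
proof -
  let ?p1 = "\<lambda>u. p (c * u)" and ?p2 = "\<lambda>u. p (c + u * (1 - c))"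
  let ?\<Theta> = glued_Q_unit and ?cmp = "dcomp X D T"
  obtain G1 where G1: "glob.natural_arrow G1 (glued_Q (p 0)) (glued_Q (p c))"
      "?cmp (?\<Theta> (p c)) (dcls X D T ?p1) = ?cmp G1 (?\<Theta> (p 0))"
    using init unfolding tamed_def by auto
  obtain G2 where G2: "glob.natural_arrow G2 (glued_Q (p c)) (glued_Q (p 1))"
      "?cmp (?\<Theta> (p 1)) (dcls X D T ?p2) = ?cmp G2 (?\<Theta> (p c))"
    using final unfolding tamed_def by auto
  have pts: "p 0 \<in> T" "p c \<in> T" "p 1 \<in> T" using dp_pt[OF p] c by auto
  have f1: "dcls X D T ?p1 \<in> dhom X D T (p 0) (p c)"
    and f2: "dcls X D T ?p2 \<in> dhom X D T (p c) (p 1)"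
    using dhomI[OF dp_reparam[OF p adm_initial[OF c]]] dhomI[OF dp_reparam[OF p adm_final[OF c]]] by simp_all
  have th: "?\<Theta> (p 0) \<in> dhom X D T (p 0) (glued_Q (p 0))" "?\<Theta> (p c) \<in> dhom X D T (p c) (glued_Q (p c))"
    "?\<Theta> (p 1) \<in> dhom X D T (p 1) (glued_Q (p 1))"
    using glued_Q_hom pts by blast+
  have g: "G1 \<in> dhom X D T (glued_Q (p 0)) (glued_Q (p c))" "G2 \<in> dhom X D T (glued_Q (p c)) (glued_Q (p 1))"
    using G1(1) G2(1) unfolding glob.natural_arrow_def by auto
  have "?cmp (?\<Theta> (p 1)) (dcls X D T p) = ?cmp (?cmp (?\<Theta> (p 1)) (dcls X D T ?p2)) (dcls X D T ?p1)"
    using cls_split[OF p c] cat_assoc[OF f1 f2 th(3)] by simp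
  also have "\<dots> = ?cmp G2 (?cmp (?\<Theta> (p c)) (dcls X D T ?p1))"
    using G2(2) cat_assoc[OF f1 th(2) g(2)] by simp
  also have "\<dots> = ?cmp (?cmp G2 G1) (?\<Theta> (p 0))"
    using G1(2) cat_assoc[OF th(1) g] by simp
  finally show ?thesis
    unfolding tamed_def using glob.natural_arrow_comp[OF G1(1) G2(1)] by auto
qed

lemma tamed_all: "p \<in> D \<Longrightarrow> tamed p"
proof -
  assume "p \<in> D"
  then obtain n t where nt: "0 < n" "t 0 = 0" "t n = 1" "\<forall>i<n. t i < t (Suc i)"
      "\<forall>i<n. (\<lambda>s. p (t i + s * (t (Suc i) - t i))) \<in> dpaths D (Xk 1) \<union> dpaths D (Xk 2)"
    using subdivision by blast
  have "p \<in> D \<longrightarrow> tamed p"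
  proof (rule subdivision_induct[where P="\<lambda>q. q \<in> D \<longrightarrow> tamed q"
        and Prim="\<lambda>q. q \<in> dpaths D (Xk 1) \<union> dpaths D (Xk 2)", OF _ _ nt])
    show "q \<in> D \<longrightarrow> tamed q" if "q \<in> dpaths D (Xk 1) \<union> dpaths D (Xk 2)" for q
      using that tamed_piece by blast
    show "q \<in> D \<longrightarrow> tamed q"
      if c: "0 < c" "c < 1" and IH: "(\<lambda>u. q (c * u)) \<in> D \<longrightarrow> tamed (\<lambda>u. q (c * u))"
        "(\<lambda>u. q (c + u * (1 - c))) \<in> D \<longrightarrow> tamed (\<lambda>u. q (c + u * (1 - c)))" for q c
    proof
      assume q: "q \<in> D"
      then have "q \<in> dpaths D T" using D_img unfolding dpaths_def by auto
      moreover have "(\<lambda>u. q (c * u)) \<in> D" "(\<lambda>u. q (c + u * (1 - c))) \<in> D"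
        using D_reparam[OF q adm_initial] D_reparam[OF q adm_final] c by auto
      ultimately show "tamed q" using tamed_cut[of q c] c IH by simp
    qed
  qed
  then show ?thesis using \<open>p \<in> D\<close> by blast
qed

text \<open>Naturality of the glued unit along every morphism of \<open>\<pi>\<^sub>1(X,B)\<close>: for endpoints in \<open>B\<close>
  the glued unit of \<open>Q\<close> is trivial, so taming a representative is exactly naturality.\<close>
lemma glued_unit_natural:
  assumes x: "x \<in> B" and y: "y \<in> B" and f: "f \<in> dhom X D T x y"
  shows "dcomp X D T (PPm f) (glued_unit x) = dcomp X D T (glued_unit y) f"
proof -
  obtain p where p: "p \<in> dpaths D T" "p 0 = x" "p 1 = y" "f = dcls X D T p"
    using f by (rule dhomE)
  obtain G where G: "glob.natural_arrow G x y" "dcomp X D T (did X D T y) f = dcomp X D T G (did X D T x)"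
    using tamed_all[of p] p glued_Q_on_B[OF x] glued_Q_on_B[OF y] unfolding tamed_def dpaths_def by auto
  have "G \<in> dhom X D T x y" using G(1) unfolding glob.natural_arrow_def by simp
  then have "f = G" using G(2) cat_idl[OF f] cat_idr by simp
  then show ?thesis using G(1) unfolding glob.natural_arrow_def by simp
qed

lemma glued_future_retract:
  "future_retract X D T B A PPo PPm glued_unit \<and>
   (\<forall>a\<in>A. adj_counit X D T PPo glued_unit a = did X D T a)"
  by (rule glob.future_retract_criterion[OF glued_unit_A glued_triangle glued_unit_natural])

end

theorem mainTheorem10:
  fixes X :: "'a topology" and D :: "(real \<Rightarrow> 'a) set"
    and Xk Ak Bk :: "nat \<Rightarrow> 'a set" and A B :: "'a set"
    and Qo Po :: "nat \<Rightarrow> 'a \<Rightarrow> 'a"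
    and Qm Pm :: "nat \<Rightarrow> (real \<Rightarrow> 'a) set \<Rightarrow> (real \<Rightarrow> 'a) set"
    and \<theta> \<eta> :: "nat \<Rightarrow> 'a \<Rightarrow> (real \<Rightarrow> 'a) set"
    and PPo :: "'a \<Rightarrow> 'a" and PPm :: "(real \<Rightarrow> 'a) set \<Rightarrow> (real \<Rightarrow> 'a) set"
  assumes dsp: "dspace X D"
    and Xsub: "Xk 1 \<subseteq> topspace X" "Xk 2 \<subseteq> topspace X"
    and Xcov: "topspace X = (X interior_of Xk 1) \<union> (X interior_of Xk 2)"
    and Dgen: "\<forall>p. p \<in> D \<longleftrightarrow> (\<exists>(n::nat) (t::nat \<Rightarrow> real). n > 0 \<and> t 0 = 0 \<and> t n = 1 \<and>
                 (\<forall>i<n. t i < t (Suc i)) \<and>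
                 (\<forall>i<n. (\<lambda>s. p (t i + s * (t (Suc i) - t i))) \<in> dpaths D (Xk 1) \<union> dpaths D (Xk 2)))"
    and X0: "Xk 0 = Xk 1 \<inter> Xk 2"
    and ABsub: "\<forall>k\<in>{0,1,2}. Ak k \<subseteq> Bk k \<and> Bk k \<subseteq> Xk k"
    and A0: "Ak 0 = Ak 1 \<inter> Ak 2" and B0: "Bk 0 = Bk 1 \<inter> Bk 2"
    and Adef: "A = Ak 1 \<union> Ak 2" and Bdef: "B = Bk 1 \<union> Bk 2"
    and Acov: "A = (subtopology X A interior_of Ak 1) \<union> (subtopology X A interior_of Ak 2)"
    and Bcov: "B = (subtopology X B interior_of Bk 1) \<union> (subtopology X B interior_of Bk 2)"
    \<comment> \<open>compatible future retracts Q_k : pi1(X_k) \<rightarrow> pi1(X_k,B_k) with units \<theta>_k\<close>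
    and Qfr: "\<forall>k\<in>{0,1,2}. future_retract X D (Xk k) (Xk k) (Bk k) (Qo k) (Qm k) (\<theta> k)"
    and Qcomp: "\<forall>k\<in>{1,2}.
        (\<forall>x\<in>Xk 0. Qo k x = Qo 0 x) \<and>
        (\<forall>x\<in>Xk 0. \<forall>y\<in>Xk 0. \<forall>f\<in>dhom X D (Xk 0) x y.
            Qm k (dincl X D (Xk k) f) = dincl X D (Xk k) (Qm 0 f)) \<and>
        (\<forall>x\<in>Xk 0. dincl X D (Xk k) (\<theta> 0 x) = \<theta> k x)"
    \<comment> \<open>compatible future retracts P_k : pi1(X_k,B_k) \<rightarrow> pi1(X_k,A_k) with units \<eta>_k\<close>
    and Pfr: "\<forall>k\<in>{0,1,2}. future_retract X D (Xk k) (Bk k) (Ak k) (Po k) (Pm k) (\<eta> k)"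
    and Pcomp: "\<forall>k\<in>{1,2}.
        (\<forall>x\<in>Bk 0. Po k x = Po 0 x) \<and>
        (\<forall>x\<in>Bk 0. \<forall>y\<in>Bk 0. \<forall>f\<in>dhom X D (Xk 0) x y.
            Pm k (dincl X D (Xk k) f) = dincl X D (Xk k) (Pm 0 f)) \<and>
        (\<forall>x\<in>Bk 0. dincl X D (Xk k) (\<eta> 0 x) = \<eta> k x)"
    \<comment> \<open>P : pi1(X,B) \<rightarrow> pi1(X,A) a functor with P o j_k = j'_k o P_k\<close>
    and Pfun: "dfunctor X D (topspace X) B (topspace X) A PPo PPm"
    and Pglue: "\<forall>k\<in>{1,2}.
        (\<forall>x\<in>Bk k. PPo x = Po k x) \<and>
        (\<forall>x\<in>Bk k. \<forall>y\<in>Bk k. \<forall>f\<in>dhom X D (Xk k) x y.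
            PPm (dincl X D (topspace X) f) = dincl X D (topspace X) (Pm k f))"
  shows "let \<eta>P = (\<lambda>x. dincl X D (topspace X) (\<eta> (if x \<in> Bk 1 then 1 else 2) x)) in
           (\<forall>k\<in>{1,2}. \<forall>x\<in>Bk k. \<eta>P x = dincl X D (topspace X) (\<eta> k x)) \<and>
           left_adjoint_incl X D (topspace X) B A PPo PPm \<eta>P \<and>
           (\<forall>a\<in>A. adj_counit X D (topspace X) PPo \<eta>P a = did X D (topspace X) a) \<and>
           future_retract X D (topspace X) B A PPo PPm \<eta>P"
proof -
  txt \<open>The hypotheses describe the gluing situation; the interior conditions are only used
    to see that \<open>X\<^sub>1\<close> and \<open>X\<^sub>2\<close> cover \<open>X\<close>, and the subdivision property of dipaths is the
    forward direction of the description of \<open>D\<close>.\<close>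
  interpret glued_retracts X D Xk Ak Bk A B Qo Po Qm Pm \<theta> \<eta> PPo PPm
  proof unfold_locales
    show "dspace X D" by (rule dsp)
    show "topspace X = Xk 1 \<union> Xk 2"
      using Xcov interior_of_subset[of X "Xk 1"] interior_of_subset[of X "Xk 2"] Xsub by blast
    show "\<And>p. p \<in> D \<Longrightarrow> \<exists>n t. 0 < n \<and> t 0 = 0 \<and> t n = 1 \<and> (\<forall>i<n. t i < t (Suc i)) \<and>
           (\<forall>i<n. (\<lambda>s. p (t i + s * (t (Suc i) - t i))) \<in> dpaths D (Xk 1) \<union> dpaths D (Xk 2))"
      using Dgen by blast
    show "Xk 0 = Xk 1 \<inter> Xk 2" "Bk 0 = Bk 1 \<inter> Bk 2" "A = Ak 1 \<union> Ak 2" "B = Bk 1 \<union> Bk 2"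
      by (fact X0 B0 Adef Bdef)+
    show "dfunctor X D (topspace X) B (topspace X) A PPo PPm" by (fact Pfun)
    show "\<And>k. k \<in> {0,1,2} \<Longrightarrow> Ak k \<subseteq> Bk k \<and> Bk k \<subseteq> Xk k"
      "\<And>k. k \<in> {0,1,2} \<Longrightarrow> future_retract X D (Xk k) (Xk k) (Bk k) (Qo k) (Qm k) (\<theta> k)"
      "\<And>k. k \<in> {0,1,2} \<Longrightarrow> future_retract X D (Xk k) (Bk k) (Ak k) (Po k) (Pm k) (\<eta> k)"
      using ABsub Qfr Pfr by blast+
    show "\<And>k x. k \<in> {1,2} \<Longrightarrow> x \<in> Xk 0 \<Longrightarrow> Qo k x = Qo 0 x"
      "\<And>k x. k \<in> {1,2} \<Longrightarrow> x \<in> Xk 0 \<Longrightarrow> dincl X D (Xk k) (\<theta> 0 x) = \<theta> k x"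
      using Qcomp by blast+
    show "\<And>k x. k \<in> {1,2} \<Longrightarrow> x \<in> Bk 0 \<Longrightarrow> dincl X D (Xk k) (\<eta> 0 x) = \<eta> k x"
      using Pcomp by blast
    show "\<And>k x. k \<in> {1,2} \<Longrightarrow> x \<in> Bk k \<Longrightarrow> PPo x = Po k x"
      "\<And>k x y f. k \<in> {1,2} \<Longrightarrow> x \<in> Bk k \<Longrightarrow> y \<in> Bk k \<Longrightarrow> f \<in> dhom X D (Xk k) x y \<Longrightarrow>
         PPm (dincl X D (topspace X) f) = dincl X D (topspace X) (Pm k f)"
      using Pglue by blast+
  qed
  have "let \<eta>P = glued_unit in
      (\<forall>k\<in>{1,2}. \<forall>x\<in>Bk k. \<eta>P x = dincl X D (topspace X) (\<eta> k x)) \<and>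
      left_adjoint_incl X D (topspace X) B A PPo PPm \<eta>P \<and>
      (\<forall>a\<in>A. adj_counit X D (topspace X) PPo \<eta>P a = did X D (topspace X) a) \<and>
      future_retract X D (topspace X) B A PPo PPm \<eta>P"
    using glued_unit_eq glued_future_retract unfolding Let_def future_retract_def by blast
  from this[unfolded glued_unit_def] show ?thesis .
qed

end
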